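(* Let $r\ge 3$ be an integer and let $G$ be a connected $r$-regular graph of order $n$. (i) If $G$ is not (isomorphic to) the incidence graph of a projective plane of order $r-1$, then $$\gamma_{\times (r-1),t}(G)\le \frac{r(r-1)-1}{r(r-1)}\,n .$$ (ii) If $G$ is the incidence graph of a projective plane of order $r-1$ (so $n=2(r(r-1)+1)$), then $$\gamma_{\times (r-1),t}(G)=\frac{r(r-1)}{r(r-1)+1}\,n=2r(r-1).$$
   Context: All graphs are finite and simple. For a vertex $v$ of $G$, $N(v)=\{u\in V(G): uv\in E(G)\}$ is its open neighborhood. For a positive integer $k$, a $k$-tuple total dominating set of $G$ is a set $S\subseteq V(G)$ with $|N(v)\cap S|\ge k$ for every $v\in V(G)$; $\gamma_{\times k,t}(G)$ denotes the minimum cardinality of such a set. A projective plane of order $q$ consists of $q^2+q+1$ points and $q^2+q+1$ lines with an incidence relation such that every line is incident with exactly $q+1$ points, every point with exactly $q+1$ lines, any two distinct points lie on exactly one common line, and any two distinct lines share exactly one common point. Its incidence graph is the bipartite graph whose vertices are the points and the lines, a point being adjacent to a line iff they are incident. *)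

theory Defs
  imports Complex_Main
begin

definition simple_graph :: "'a set \<Rightarrow> ('a \<Rightarrow> 'a \<Rightarrow> bool) \<Rightarrow> bool" where
  "simple_graph V E \<longleftrightarrow> finite V \<and> (\<forall>u v. E u v \<longrightarrow> u \<in> V \<and> v \<in> V)
     \<and> (\<forall>u v. E u v \<longrightarrow> E v u) \<and> (\<forall>v. \<not> E v v)"

definition nbhd :: "'a set \<Rightarrow> ('a \<Rightarrow> 'a \<Rightarrow> bool) \<Rightarrow> 'a \<Rightarrow> 'a set" where
  "nbhd V E v = {u \<in> V. E u v}"

definition regular :: "'a set \<Rightarrow> ('a \<Rightarrow> 'a \<Rightarrow> bool) \<Rightarrow> nat \<Rightarrow> bool" where
  "regular V E r \<longleftrightarrow> (\<forall>v \<in> V. card (nbhd V E v) = r)"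

definition connected_graph :: "'a set \<Rightarrow> ('a \<Rightarrow> 'a \<Rightarrow> bool) \<Rightarrow> bool" where
  "connected_graph V E \<longleftrightarrow> (\<forall>u \<in> V. \<forall>v \<in> V. E\<^sup>*\<^sup>* u v)"

definition ktuple_tds :: "'a set \<Rightarrow> ('a \<Rightarrow> 'a \<Rightarrow> bool) \<Rightarrow> nat \<Rightarrow> 'a set \<Rightarrow> bool" where
  "ktuple_tds V E k S \<longleftrightarrow> S \<subseteq> V \<and> (\<forall>v \<in> V. card (nbhd V E v \<inter> S) \<ge> k)"

definition ktuple_tdn :: "'a set \<Rightarrow> ('a \<Rightarrow> 'a \<Rightarrow> bool) \<Rightarrow> nat \<Rightarrow> nat" where
  "ktuple_tdn V E k = Min {card S | S. ktuple_tds V E k S}"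

definition proj_plane :: "'p set \<Rightarrow> 'l set \<Rightarrow> ('p \<Rightarrow> 'l \<Rightarrow> bool) \<Rightarrow> nat \<Rightarrow> bool" where
  "proj_plane P L I q \<longleftrightarrow> finite P \<and> finite L
     \<and> card P = q^2 + q + 1 \<and> card L = q^2 + q + 1
     \<and> (\<forall>l \<in> L. card {p \<in> P. I p l} = q + 1)
     \<and> (\<forall>p \<in> P. card {l \<in> L. I p l} = q + 1)
     \<and> (\<forall>p1 \<in> P. \<forall>p2 \<in> P. p1 \<noteq> p2 \<longrightarrow> (\<exists>!l. l \<in> L \<and> I p1 l \<and> I p2 l))
     \<and> (\<forall>l1 \<in> L. \<forall>l2 \<in> L. l1 \<noteq> l2 \<longrightarrow> (\<exists>!p. p \<in> P \<and> I p l1 \<and> I p l2))"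

definition inc_vertices :: "'p set \<Rightarrow> 'l set \<Rightarrow> ('p + 'l) set" where
  "inc_vertices P L = Inl ` P \<union> Inr ` L"

fun inc_adj :: "'p set \<Rightarrow> 'l set \<Rightarrow> ('p \<Rightarrow> 'l \<Rightarrow> bool) \<Rightarrow> ('p + 'l) \<Rightarrow> ('p + 'l) \<Rightarrow> bool" where
  "inc_adj P L I (Inl p) (Inr l) = (p \<in> P \<and> l \<in> L \<and> I p l)"
| "inc_adj P L I (Inr l) (Inl p) = (p \<in> P \<and> l \<in> L \<and> I p l)"
| "inc_adj P L I _ _ = False"

definition graph_iso :: "'a set \<Rightarrow> ('a \<Rightarrow> 'a \<Rightarrow> bool) \<Rightarrow> 'b set \<Rightarrow> ('b \<Rightarrow> 'b \<Rightarrow> bool) \<Rightarrow> ('a \<Rightarrow> 'b) \<Rightarrow> bool" where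
  "graph_iso V E V' E' f \<longleftrightarrow> bij_betw f V V' \<and> (\<forall>u \<in> V. \<forall>v \<in> V. E u v \<longleftrightarrow> E' (f u) (f v))"

text \<open>G is isomorphic to the incidence graph of some projective plane of order q.
  Points and lines may be taken from the vertex type (they inject into V).\<close>
definition is_pp_incidence_graph :: "'a set \<Rightarrow> ('a \<Rightarrow> 'a \<Rightarrow> bool) \<Rightarrow> nat \<Rightarrow> bool" where
  "is_pp_incidence_graph V E q \<longleftrightarrow>
     (\<exists>(P::'a set) (L::'a set) I f. proj_plane P L I q
        \<and> graph_iso V E (inc_vertices P L) (inc_adj P L I) f)"

end

theory Submission
  imports Defs "HOL-Computational_Algebra.Primes"
begin

text \<open>
  In an r-regular graph the complement of an (r-1)-tuple total dominating set is exactly a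
  packing, a set of vertices no two of which have a common neighbour, so the domination number
  is n minus the largest size of a packing. Packings are the independent sets of the graph in
  which two distinct vertices are collinear if they have a common neighbour; this graph has
  maximum degree r(r-1). A Brooks-type argument colours a connected collinearity graph with
  r(r-1) colours unless it is complete on r(r-1)+1 vertices, and a colour class is a packing of
  size at least n/(r(r-1)). The colouring is greedy towards a vertex with fewer than r(r-1)
  collinear vertices if there is one. Otherwise two non-collinear vertices a, b with a common
  collinear vertex \<rho> get the same colour and the rest is coloured greedily towards \<rho>; the pair
  is chosen to maximise the largest component left after deleting it, and counting the lines
  through a and b shows that this deletion leaves the collinearity graph connected.

  The argument is carried out for incidence structures with r points on every line and r lines
  through every point: the graph itself (points and lines both the vertices) and, when the
  graph is bipartite, its two sides are such structures. A connected graph has a connected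
  collinearity graph or is bipartite with the two sides as collinearity components. A complete
  component makes the graph an r-regular friendship graph, impossible for r \<ge> 3 by counting
  closed walks of prime length p dividing r - 1 modulo p, or, in the bipartite case, the
  incidence graph of a projective plane of order r - 1, where a largest packing is one point
  together with one line.
\<close>

section \<open>Greedy colourings\<close>

definition proper_colouring :: "('a \<Rightarrow> 'a \<Rightarrow> bool) \<Rightarrow> nat \<Rightarrow> ('a \<Rightarrow> nat) \<Rightarrow> 'a set \<Rightarrow> bool" where
  "proper_colouring adj D f S \<longleftrightarrow>
     (\<forall>x\<in>S. f x < D) \<and> (\<forall>x\<in>S. \<forall>y\<in>S. adj x y \<longrightarrow> f x \<noteq> f y)"

lemma exists_unused_colour:
  assumes "finite S" "card S < (D::nat)"
  shows "\<exists>c<D. c \<notin> S"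
proof (rule ccontr)
  assume "\<not> ?thesis"
  then have "{..<D} \<subseteq> S" by auto
  then have "card {..<D} \<le> card S" using assms(1) by (rule card_mono[rotated])
  then show False using assms(2) by simp
qed

lemma proper_colouring_insert:
  assumes col: "proper_colouring adj D f S" and sym: "symp adj" and irr: "irreflp adj"
    and fin: "finite {v\<in>S. adj u v}" and few: "card (f ` {v\<in>S. adj u v}) < D"
  shows "\<exists>c. proper_colouring adj D (f(u := c)) (insert u S)"
proof -
  obtain c where c: "c < D" "c \<notin> f ` {v\<in>S. adj u v}"
    using exists_unused_colour[OF finite_imageI[OF fin] few] by blast
  have "adj u v \<Longrightarrow> v \<noteq> u" for v using irr by (auto simp: irreflp_def)
  then have "proper_colouring adj D (f(u := c)) (insert u S)"
    using col c sym unfolding proper_colouring_def symp_def by (auto simp: image_iff)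
  then show ?thesis ..
qed

lemma greedy_colouring_extend:
  assumes fin: "finite K"
    and boundary: "\<And>U. U \<subseteq> K \<Longrightarrow> U \<noteq> {} \<Longrightarrow> U \<noteq> K \<Longrightarrow> \<exists>u\<in>U. \<exists>y\<in>K-U. adj u y"
    and deg: "\<And>u. u \<in> K \<Longrightarrow> finite {v. adj u v} \<and> card {v. adj u v} \<le> D"
    and sym: "symp adj" and irr: "irreflp adj"
    and disj: "X \<inter> K = {}" and col0: "proper_colouring adj D f0 X"
  shows "U \<subseteq> K \<Longrightarrow> U \<noteq> K \<Longrightarrow> \<exists>f. (\<forall>x\<in>X. f x = f0 x) \<and> proper_colouring adj D f (X \<union> U)"
proof (induction "card U" arbitrary: U rule: less_induct)
  case less
  show ?case
  proof (cases "U = {}")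
    case True
    then show ?thesis using col0 by auto
  next
    case False
    obtain u y where u: "u \<in> U" and y: "y \<in> K - U" and uy: "adj u y"
      using boundary[OF less.prems(1) False less.prems(2)] by blast
    have "finite U" using less.prems(1) fin finite_subset by blast
    then have "card (U - {u}) < card U" using u by (rule card_Diff1_less)
    moreover have "U - {u} \<subseteq> K" "U - {u} \<noteq> K" using less.prems y by auto
    ultimately obtain f where f: "\<forall>x\<in>X. f x = f0 x" "proper_colouring adj D f (X \<union> (U - {u}))"
      using less.hyps by blast
    have uK: "u \<in> K" using u less.prems by auto
    define N where "N = {v\<in>X \<union> (U - {u}). adj u v}"
    \<comment> \<open>the uncoloured neighbour y leaves a colour free for u\<close>
    have N: "N \<subseteq> {v. adj u v} - {y}" using y disj unfolding N_def by auto
    have fin_nbrs: "finite {v. adj u v}" "card {v. adj u v} \<le> D" using deg[OF uK] by auto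
    then have "card N \<le> card {v. adj u v} - 1" using card_mono[OF _ N] uy by simp
    moreover have "card {v. adj u v} > 0" using fin_nbrs(1) uy card_gt_0_iff by blast
    ultimately have "card N < D" using fin_nbrs(2) by linarith
    moreover have "finite N" using fin_nbrs N finite_subset by blast
    ultimately have "card (f ` N) < D" "finite N" using card_image_le le_less_trans by blast+
    then obtain c where c: "proper_colouring adj D (f(u := c)) (insert u (X \<union> (U - {u})))"
      using proper_colouring_insert[OF f(2) sym irr] unfolding N_def by blast
    have "insert u (X \<union> (U - {u})) = X \<union> U" using u by auto
    moreover have "u \<notin> X" using uK disj by auto
    ultimately show ?thesis using c f(1) by (intro exI[of _ "f(u := c)"]) auto
  qed
qed

lemma large_independent_set_of_colouring:
  assumes col: "proper_colouring adj D f S" and fin: "finite S" and D: "D > 0"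
  shows "\<exists>T\<subseteq>S. (\<forall>x\<in>T. \<forall>y\<in>T. \<not> adj x y) \<and> card S \<le> D * card T"
proof -
  have "\<exists>i<D. card S \<le> D * card {x\<in>S. f x = i}"
  proof (rule ccontr)
    assume small: "\<not> ?thesis"
    have "S = (\<Union>i<D. {x\<in>S. f x = i})" using col unfolding proper_colouring_def by auto
    then have "card S \<le> (\<Sum>i<D. card {x\<in>S. f x = i})" by (metis card_UN_le finite_lessThan)
    then have "D * card S \<le> D * (\<Sum>i<D. card {x\<in>S. f x = i})" by simp
    also have "\<dots> = (\<Sum>i<D. D * card {x\<in>S. f x = i})" by (rule sum_distrib_left)
    also have "\<dots> < (\<Sum>i<D. card S)" using small D by (intro sum_strict_mono) auto
    finally show False by simp
  qed
  then obtain i where "card S \<le> D * card {x\<in>S. f x = i}" by blast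
  moreover have "\<forall>x\<in>{x\<in>S. f x = i}. \<forall>y\<in>{x\<in>S. f x = i}. \<not> adj x y"
    using col unfolding proper_colouring_def by blast
  moreover have "{x\<in>S. f x = i} \<subseteq> S" by blast
  ultimately show ?thesis by blast
qed

lemma rtranclp_leaves_set:
  assumes "R\<^sup>*\<^sup>* x y" "x \<in> U" "y \<notin> U"
  shows "\<exists>u v. R\<^sup>*\<^sup>* x u \<and> R u v \<and> u \<in> U \<and> v \<notin> U"
  using assms
proof (induction rule: rtranclp_induct)
  case (step y z)
  then show ?case by (cases "y \<in> U") auto
qed simp

lemma rtranclp_connected_boundary_edge:
  assumes conn: "\<forall>p\<in>K. \<forall>q\<in>K. R\<^sup>*\<^sup>* p q" and R: "\<And>u v. R u v \<Longrightarrow> u \<in> K \<and> v \<in> K"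
    and U: "U \<subseteq> K" "U \<noteq> {}" "U \<noteq> K"
  shows "\<exists>u\<in>U. \<exists>y\<in>K-U. R u y"
proof -
  obtain u0 where "u0 \<in> U" using U(2) by blast
  moreover obtain q where "q \<in> K" "q \<notin> U" using U(1,3) by blast
  ultimately obtain u v where "R u v" "u \<in> U" "v \<notin> U"
    using rtranclp_leaves_set[of R u0 q U] conn U(1) by blast
  then show ?thesis using R by blast
qed

lemma rtranclp_connected_closed_eq:
  assumes conn: "\<forall>p\<in>K. \<forall>q\<in>K. R\<^sup>*\<^sup>* p q" and R: "\<And>u v. R u v \<Longrightarrow> u \<in> K \<and> v \<in> K"
    and X: "X \<subseteq> K" "X \<noteq> {}" "\<And>x y. x \<in> X \<Longrightarrow> R x y \<Longrightarrow> y \<in> X"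
  shows "X = K"
proof (rule ccontr)
  assume "X \<noteq> K"
  then obtain u y where "u \<in> X" "y \<in> K - X" "R u y"
    using rtranclp_connected_boundary_edge[OF conn R X(1,2)] by blast
  then show False using X(3) by blast
qed

section \<open>Regular incidence structures\<close>

lemma card_filter_eq_sum: "finite A \<Longrightarrow> card {x\<in>A. Q x} = (\<Sum>x\<in>A. if Q x then 1 else (0::nat))"
  by (simp add: sum.inter_filter[symmetric])

lemma proj_plane_order_identity: "r \<ge> 1 \<Longrightarrow> (r - 1)\<^sup>2 + (r - 1) + 1 = r * (r - 1) + (1::nat)"
  by (cases r) (auto simp: power2_eq_square)

locale regular_incidence =
  fixes P :: "'p set" and C :: "'c set" and inc :: "'p \<Rightarrow> 'c \<Rightarrow> bool" and r :: nat
  assumes finite_points: "finite P" and finite_lines: "finite C"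
    and card_lines_through_point: "\<And>p. p \<in> P \<Longrightarrow> card {c\<in>C. inc p c} = r"
    and card_points_on_line: "\<And>c. c \<in> C \<Longrightarrow> card {p\<in>P. inc p c} = r"
    and r_ge_3: "r \<ge> 3"
begin

definition lines_through :: "'p \<Rightarrow> 'c set" where "lines_through p = {c\<in>C. inc p c}"
definition points_on :: "'c \<Rightarrow> 'p set" where "points_on c = {p\<in>P. inc p c}"

definition collinear :: "'p \<Rightarrow> 'p \<Rightarrow> bool" where
  "collinear p q \<longleftrightarrow> p \<in> P \<and> q \<in> P \<and> p \<noteq> q \<and> (\<exists>c\<in>C. inc p c \<and> inc q c)"

definition collinearity_connected :: bool where
  "collinearity_connected \<longleftrightarrow> (\<forall>p\<in>P. \<forall>q\<in>P. collinear\<^sup>*\<^sup>* p q)"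

definition pairwise_collinear :: bool where
  "pairwise_collinear \<longleftrightarrow> (\<forall>p\<in>P. \<forall>q\<in>P. p \<noteq> q \<longrightarrow> collinear p q)"

definition noncollinear_set :: "'p set \<Rightarrow> bool" where
  "noncollinear_set T \<longleftrightarrow> T \<subseteq> P \<and> (\<forall>x\<in>T. \<forall>y\<in>T. \<not> collinear x y)"

lemma collinear_sym: "symp collinear"
  unfolding symp_def collinear_def by blast

lemma collinear_irrefl: "irreflp collinear"
  unfolding irreflp_def collinear_def by blast

lemma collinear_in_points: "collinear p q \<Longrightarrow> p \<in> P \<and> q \<in> P"
  unfolding collinear_def by blast

lemma finite_lines_through: "finite (lines_through p)"
  unfolding lines_through_def using finite_lines by simp

lemma finite_points_on: "finite (points_on c)"
  unfolding points_on_def using finite_points by simp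

lemma card_lines_through: "p \<in> P \<Longrightarrow> card (lines_through p) = r"
  unfolding lines_through_def by (rule card_lines_through_point)

lemma card_points_on: "c \<in> C \<Longrightarrow> card (points_on c) = r"
  unfolding points_on_def by (rule card_points_on_line)

lemma finite_collinear: "finite {q. collinear p q}"
  using finite_points by (rule rev_finite_subset) (auto simp: collinear_def)

lemma card_points_on_minus_le:
  assumes "c \<in> lines_through p" "p \<in> P"
  shows "card (points_on c - {p}) \<le> r - 1"
  using assms card_points_on[of c] finite_points_on
  by (auto simp: lines_through_def points_on_def card_Diff_singleton)

lemma card_collinear_le:
  assumes p: "p \<in> P"
  shows "card {q. collinear p q} \<le> r * (r - 1)"
proof -
  have "{q. collinear p q} \<subseteq> (\<Union>c\<in>lines_through p. points_on c - {p})"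
    unfolding collinear_def lines_through_def points_on_def by auto
  then have "card {q. collinear p q} \<le> card (\<Union>c\<in>lines_through p. points_on c - {p})"
    by (rule card_mono[rotated]) (simp add: finite_lines_through finite_points_on)
  also have "\<dots> \<le> (\<Sum>c\<in>lines_through p. card (points_on c - {p}))"
    by (rule card_UN_le[OF finite_lines_through])
  also have "\<dots> \<le> (\<Sum>c\<in>lines_through p. r - 1)"
    by (rule sum_mono) (rule card_points_on_minus_le[OF _ p])
  also have "\<dots> = r * (r - 1)" using card_lines_through[OF p] by simp
  finally show ?thesis .
qed

lemma large_noncollinear_set_of_colouring:
  assumes "proper_colouring collinear (r * (r - 1)) f P"
  shows "\<exists>T. noncollinear_set T \<and> card P \<le> r * (r - 1) * card T"
  using large_independent_set_of_colouring[OF assms finite_points] r_ge_3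
  unfolding noncollinear_set_def by fastforce

lemma colouring_extend_to_point:
  assumes w: "w \<in> P" and col: "proper_colouring collinear (r * (r - 1)) f (P - {w})"
    and few: "card (f ` {q. collinear w q}) < r * (r - 1)"
  shows "\<exists>g. proper_colouring collinear (r * (r - 1)) g P"
proof -
  have "f ` {v\<in>P - {w}. collinear w v} \<subseteq> f ` {q. collinear w q}" by auto
  then have "card (f ` {v\<in>P - {w}. collinear w v}) \<le> card (f ` {q. collinear w q})"
    by (rule card_mono[OF finite_imageI[OF finite_collinear]])
  then have "card (f ` {v\<in>P - {w}. collinear w v}) < r * (r - 1)" using few by linarith
  then obtain c where "proper_colouring collinear (r * (r - 1)) (f(w := c)) (insert w (P - {w}))"
    using proper_colouring_insert[OF col collinear_sym collinear_irrefl] finite_points by fastforce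
  moreover have "insert w (P - {w}) = P" using w by auto
  ultimately show ?thesis by auto
qed

lemma extend_colouring_connected_minus_point:
  assumes conn: "\<forall>p\<in>K. \<forall>q\<in>K. R\<^sup>*\<^sup>* p q" and R: "\<And>u v. R u v \<Longrightarrow> collinear u v \<and> u \<in> K \<and> v \<in> K"
    and K: "K \<subseteq> P" "X \<inter> K = {}" and X: "proper_colouring collinear (r * (r - 1)) f0 X"
    and w: "w \<in> K"
  shows "\<exists>f. (\<forall>x\<in>X. f x = f0 x) \<and> proper_colouring collinear (r * (r - 1)) f (X \<union> (K - {w}))"
proof (rule greedy_colouring_extend)
  show "finite K" using K(1) finite_points finite_subset by blast
  show "\<exists>u\<in>U. \<exists>y\<in>K - U. collinear u y" if "U \<subseteq> K" "U \<noteq> {}" "U \<noteq> K" for U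
    using rtranclp_connected_boundary_edge[of K R U] conn R that by blast
  show "finite {v. collinear u v} \<and> card {v. collinear u v} \<le> r * (r - 1)" if "u \<in> K" for u
    using that K(1) finite_collinear card_collinear_le by blast
qed (use assms collinear_sym collinear_irrefl in auto)

lemma large_noncollinear_set_if_deficient:
  assumes conn: "collinearity_connected" and d: "d \<in> P" "card {q. collinear d q} < r * (r - 1)"
  shows "\<exists>T. noncollinear_set T \<and> card P \<le> r * (r - 1) * card T"
proof -
  have "\<exists>f. (\<forall>x\<in>{}. f x = 0) \<and> proper_colouring collinear (r * (r - 1)) f ({} \<union> (P - {d}))"
    by (rule extend_colouring_connected_minus_point[of P collinear])
      (use conn d collinear_in_points in \<open>auto simp: collinearity_connected_def proper_colouring_def\<close>)
  then obtain f where "proper_colouring collinear (r * (r - 1)) f (P - {d})" by auto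
  moreover have "card (f ` {q. collinear d q}) < r * (r - 1)"
    using d(2) card_image_le[OF finite_collinear] le_less_trans by blast
  ultimately obtain g where "proper_colouring collinear (r * (r - 1)) g P"
    using colouring_extend_to_point[OF d(1)] by auto
  then show ?thesis by (rule large_noncollinear_set_of_colouring)
qed

definition collinear_off :: "'p \<Rightarrow> 'p \<Rightarrow> 'p \<Rightarrow> 'p \<Rightarrow> bool" where
  "collinear_off a b u v \<longleftrightarrow> collinear u v \<and> u \<notin> {a, b} \<and> v \<notin> {a, b}"

definition component_off :: "'p \<Rightarrow> 'p \<Rightarrow> 'p \<Rightarrow> 'p set" where
  "component_off a b x = {y. (collinear_off a b)\<^sup>*\<^sup>* x y}"

definition lines_meeting :: "'p set \<Rightarrow> 'c set" where
  "lines_meeting D = {c\<in>C. \<exists>p\<in>D. inc p c}"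

definition links :: "'p \<Rightarrow> 'p set \<Rightarrow> nat" where
  "links z D = card (lines_through z \<inter> lines_meeting D)"

lemma component_off_refl: "x \<in> component_off a b x"
  unfolding component_off_def by simp

lemma component_off_subset:
  assumes "x \<in> P - {a, b}"
  shows "component_off a b x \<subseteq> P - {a, b}"
proof
  fix y assume "y \<in> component_off a b x"
  then have "(collinear_off a b)\<^sup>*\<^sup>* x y" unfolding component_off_def by simp
  then show "y \<in> P - {a, b}"
    by (induction rule: rtranclp_induct) (use assms in \<open>auto simp: collinear_off_def collinear_def\<close>)
qed

lemma finite_component_off: "x \<in> P - {a, b} \<Longrightarrow> finite (component_off a b x)"
  using component_off_subset finite_points finite_subset by (metis Diff_subset subset_trans)

lemma component_off_sym: "y \<in> component_off a b x \<Longrightarrow> x \<in> component_off a b y"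
proof -
  have "symp (collinear_off a b)"
    using collinear_sym unfolding collinear_off_def symp_def by blast
  then show "y \<in> component_off a b x \<Longrightarrow> x \<in> component_off a b y"
    unfolding component_off_def using symp_rtranclp by (fastforce simp: sympD)
qed

lemma component_off_trans:
  "y \<in> component_off a b x \<Longrightarrow> z \<in> component_off a b y \<Longrightarrow> z \<in> component_off a b x"
  unfolding component_off_def by simp

lemma component_off_eq: "y \<in> component_off a b x \<Longrightarrow> component_off a b y = component_off a b x"
  using component_off_sym component_off_trans by blast

lemma component_off_closed:
  assumes "p \<in> component_off a b x" "x \<in> P - {a, b}" "q \<notin> {a, b}" "collinear p q"
  shows "q \<in> component_off a b x"
proof -
  have "collinear_off a b p q"
    using assms component_off_subset[OF assms(2)] unfolding collinear_off_def by auto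
  then show ?thesis using assms(1) unfolding component_off_def by simp
qed

lemma points_on_line_meeting_component:
  assumes x: "x \<in> P - {a, b}" and c: "c \<in> lines_meeting (component_off a b x)"
  shows "points_on c \<subseteq> component_off a b x \<union> {a, b}"
proof
  fix q assume q: "q \<in> points_on c"
  obtain p where p: "p \<in> component_off a b x" "inc p c" "c \<in> C"
    using c unfolding lines_meeting_def by auto
  have "p \<in> P" using p(1) component_off_subset[OF x] by auto
  then show "q \<in> component_off a b x \<union> {a, b}"
    using component_off_closed[OF p(1) x, of q] p q
    unfolding points_on_def collinear_def by (cases "q = p") auto
qed

lemma lines_meeting_components_disjoint:
  assumes x: "x \<in> P - {a, b}" and y: "y \<in> P - {a, b}" "y \<notin> component_off a b x"
  shows "lines_meeting (component_off a b x) \<inter> lines_meeting (component_off a b y) = {}"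
proof (rule ccontr)
  assume "\<not> ?thesis"
  then obtain c q where c: "c \<in> lines_meeting (component_off a b x)" "q \<in> component_off a b y" "inc q c"
    unfolding lines_meeting_def by auto
  have "q \<in> P - {a, b}" using c(2) component_off_subset[OF y(1)] by auto
  then have "q \<in> component_off a b x"
    using points_on_line_meeting_component[OF x c(1)] c by (auto simp: points_on_def lines_meeting_def)
  then show False using c(2) y(2) component_off_sym component_off_trans by blast
qed

lemma links_le_card_lines_through:
  assumes z: "z \<in> P" and disj: "lines_meeting D1 \<inter> lines_meeting D2 = {}"
  shows "links z D1 + links z D2 \<le> r"
proof -
  have "links z D1 + links z D2 = card ((lines_through z \<inter> lines_meeting D1) \<union> (lines_through z \<inter> lines_meeting D2))"
    unfolding links_def by (rule card_Un_disjoint[symmetric]) (use finite_lines_through disj in auto)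
  also have "\<dots> \<le> card (lines_through z)" by (rule card_mono[OF finite_lines_through]) auto
  finally show ?thesis using card_lines_through[OF z] by simp
qed

lemma double_count_incidences:
  assumes D: "D \<subseteq> P"
  shows "r * card D = (\<Sum>c\<in>lines_meeting D. card {p\<in>D. inc p c})"
proof -
  have fD: "finite D" using D finite_points finite_subset by blast
  have "r * card D = (\<Sum>p\<in>D. card {c\<in>C. inc p c})"
    using D card_lines_through_point by (simp add: subset_iff)
  also have "\<dots> = (\<Sum>p\<in>D. \<Sum>c\<in>C. if inc p c then 1 else 0)"
    using card_filter_eq_sum[OF finite_lines] by simp
  also have "\<dots> = (\<Sum>c\<in>C. \<Sum>p\<in>D. if inc p c then 1 else 0)" by (rule sum.swap)
  also have "\<dots> = (\<Sum>c\<in>C. card {p\<in>D. inc p c})" using card_filter_eq_sum[OF fD] by simp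
  also have "\<dots> = (\<Sum>c\<in>lines_meeting D. card {p\<in>D. inc p c})"
    by (rule sum.mono_neutral_right[OF finite_lines]) (auto simp: lines_meeting_def fD)
  finally show ?thesis .
qed

lemma card_lines_meeting_component:
  assumes x: "x \<in> P - {a, b}" and ab: "a \<in> P" "b \<in> P" "a \<noteq> b"
  defines "D \<equiv> component_off a b x"
  shows "r * card D + links a D + links b D = r * card (lines_meeting D)"
proof -
  have DP: "D \<subseteq> P - {a, b}" unfolding D_def by (rule component_off_subset[OF x])
  have fD: "finite D" unfolding D_def by (rule finite_component_off[OF x])
  \<comment> \<open>the r points of a line meeting D lie in D \<union> {a, b}\<close>
  have line: "card {p\<in>D. inc p c} + ((if c \<in> lines_through a then 1 else 0)
      + (if c \<in> lines_through b then 1 else 0)) = r" if c: "c \<in> lines_meeting D" for c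
  proof -
    have cC: "c \<in> C" using c lines_meeting_def by auto
    have "points_on c = {p\<in>D. inc p c} \<union> (points_on c \<inter> {a, b})"
      using points_on_line_meeting_component[OF x] c DP unfolding D_def points_on_def by auto
    moreover have "card ({p\<in>D. inc p c} \<union> (points_on c \<inter> {a, b}))
        = card {p\<in>D. inc p c} + card (points_on c \<inter> {a, b})"
      by (rule card_Un_disjoint) (use fD DP in auto)
    ultimately have "card (points_on c) = card {p\<in>D. inc p c} + card (points_on c \<inter> {a, b})"
      by simp
    moreover have "card (points_on c \<inter> {a, b}) =
        (if c \<in> lines_through a then 1 else 0) + (if c \<in> lines_through b then 1 else 0)"
      using ab cC by (auto simp: points_on_def lines_through_def Int_insert_right)
    ultimately show ?thesis using card_points_on[OF cC] by simp
  qed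
  have links: "links z D = (\<Sum>c\<in>lines_meeting D. if c \<in> lines_through z then 1 else 0)" for z
  proof -
    have "lines_through z \<inter> lines_meeting D = {c\<in>lines_meeting D. c \<in> lines_through z}" by auto
    moreover have "finite (lines_meeting D)" using finite_lines by (simp add: lines_meeting_def)
    ultimately show ?thesis unfolding links_def by (simp add: card_filter_eq_sum)
  qed
  have "r * card D + links a D + links b D = (\<Sum>c\<in>lines_meeting D. card {p\<in>D. inc p c}
      + ((if c \<in> lines_through a then 1 else 0) + (if c \<in> lines_through b then 1 else 0)))"
    using double_count_incidences[of D] DP by (simp add: links sum.distrib subset_iff)
  also have "\<dots> = r * card (lines_meeting D)" using line by simp
  finally show ?thesis .
qed

lemma links_eq_0: "links z D = 0 \<Longrightarrow> lines_through z \<inter> lines_meeting D = {}"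
  unfolding links_def using finite_lines_through by simp

lemma component_insert_closed:
  assumes x: "x \<in> P - {a, b}" and z: "z \<in> {a, b}" "z \<in> P" "z' \<in> {a, b}" "z' \<noteq> z"
    and covers: "lines_through z \<subseteq> lines_meeting (component_off a b x)"
    and misses: "links z' (component_off a b x) = 0"
    and p: "p \<in> insert z (component_off a b x)" and q: "collinear p q"
  shows "q \<in> insert z (component_off a b x)"
proof -
  obtain c where c: "c \<in> C" "inc p c" "inc q c" "q \<in> P"
    using q unfolding collinear_def by auto
  have "c \<in> lines_meeting (component_off a b x)"
    using p c covers by (auto simp: lines_through_def lines_meeting_def)
  then have "q \<in> component_off a b x \<union> {a, b}"
    using points_on_line_meeting_component[OF x] c by (auto simp: points_on_def)
  moreover have "q \<noteq> z'"
    using links_eq_0[OF misses] c \<open>c \<in> lines_meeting _\<close> by (auto simp: lines_through_def)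
  ultimately show ?thesis using z by auto
qed

lemma collinear_leaving_component:
  assumes x: "x \<in> P - {a, b}" and p: "p \<in> component_off a b x" and pq: "collinear p q"
    and q: "q \<notin> component_off a b x"
  shows "q \<in> {a, b} \<and> links q (component_off a b x) \<noteq> 0"
proof -
  have "q \<in> {a, b}" using component_off_closed[OF p x _ pq] q by blast
  obtain c where c: "c \<in> C" "inc p c" "inc q c" using pq unfolding collinear_def by auto
  then have "c \<in> lines_through q \<inter> lines_meeting (component_off a b x)"
    using p by (auto simp: lines_through_def lines_meeting_def)
  then show ?thesis using \<open>q \<in> {a, b}\<close> links_eq_0 by blast
qed

lemma links_pos:
  assumes conn: collinearity_connected and x: "x \<in> P - {a, b}" and ab: "a \<in> P" "b \<in> P"
  shows "links a (component_off a b x) + links b (component_off a b x) > 0"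
proof (rule ccontr)
  assume none: "\<not> ?thesis"
  have "q \<in> component_off a b x" if "p \<in> component_off a b x" "collinear p q" for p q
  proof (rule ccontr)
    assume "q \<notin> component_off a b x"
    then show False using collinear_leaving_component[OF x that] none by auto
  qed
  then have "component_off a b x = P"
    using component_off_subset[OF x] component_off_refl[of x a b]
    by (intro rtranclp_connected_closed_eq[of P collinear])
      (use conn collinear_in_points in \<open>auto simp: collinearity_connected_def\<close>)
  then show False using component_off_subset[OF x] ab by auto
qed

lemma links_ge_r:
  assumes conn: collinearity_connected and x: "x \<in> P - {a, b}" and ab: "a \<in> P" "b \<in> P" "a \<noteq> b"
  shows "links a (component_off a b x) + links b (component_off a b x) \<ge> r"
proof -
  define k where "k = links a (component_off a b x) + links b (component_off a b x)"
  have e: "r * card (component_off a b x) + k = r * card (lines_meeting (component_off a b x))"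
    using card_lines_meeting_component[OF x ab] k_def by simp
  \<comment> \<open>k is a positive multiple of r\<close>
  then have "card (component_off a b x) < card (lines_meeting (component_off a b x))"
    using links_pos[OF conn x ab(1,2)] k_def by (metis add_less_cancel_left add_0_right mult_less_cancel1)
  then have "r * (card (component_off a b x) + 1) \<le> r * card (lines_meeting (component_off a b x))"
    by (intro mult_le_mono2) simp
  then show ?thesis using e k_def by simp
qed

lemma lines_through_subset_if_links_eq_r:
  assumes "z \<in> P" "links z D = r"
  shows "lines_through z \<subseteq> lines_meeting D"
proof -
  have "lines_through z \<inter> lines_meeting D = lines_through z"
    using assms card_lines_through[of z] finite_lines_through
    by (intro card_subset_eq) (auto simp: links_def)
  then show ?thesis by blast
qed

lemma component_insert_eq_points:
  assumes conn: collinearity_connected and x: "x \<in> P - {a, b}"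
    and z: "z \<in> {a, b}" "z \<in> P" "z' \<in> {a, b}" "z' \<noteq> z"
    and full: "links z (component_off a b x) = r" and misses: "links z' (component_off a b x) = 0"
  shows "insert z (component_off a b x) = P"
proof (rule rtranclp_connected_closed_eq[of P collinear])
  show "insert z (component_off a b x) \<subseteq> P" using component_off_subset[OF x] z by auto
  show "\<And>p q. p \<in> insert z (component_off a b x) \<Longrightarrow> collinear p q \<Longrightarrow> q \<in> insert z (component_off a b x)"
    using component_insert_closed[OF x z lines_through_subset_if_links_eq_r[OF z(2) full] misses] by blast
qed (use conn collinear_in_points in \<open>auto simp: collinearity_connected_def\<close>)

lemma links_ne_0_if_two_components:
  assumes conn: collinearity_connected and ab: "a \<in> P" "b \<in> P" "a \<noteq> b"
    and x: "x \<in> P - {a, b}" and y: "y \<in> P - {a, b}" "y \<notin> component_off a b x"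
  shows "links a (component_off a b y) \<noteq> 0"
proof
  define D1 D2 where "D1 = component_off a b x" and "D2 = component_off a b y"
  assume "links a D2 = 0"
  have disj: "lines_meeting D1 \<inter> lines_meeting D2 = {}"
    using lines_meeting_components_disjoint[OF x y] D1_def D2_def by simp
  have "links a D1 + links b D1 \<ge> r" "links a D2 + links b D2 \<ge> r"
    using links_ge_r[OF conn x ab] links_ge_r[OF conn y(1) ab] D1_def D2_def by auto
  moreover have "links a D1 + links a D2 \<le> r" "links b D1 + links b D2 \<le> r"
    using links_le_card_lines_through[OF _ disj] ab by auto
  \<comment> \<open>all lines through b then go to D2, so all lines through a go to D1\<close>
  ultimately have "links b D1 = 0" "links a D1 = r" using \<open>links a D2 = 0\<close> by auto
  then have "insert a D1 = P" using component_insert_eq_points[OF conn x, of a b] ab D1_def by auto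
  then show False using y component_off_sym D1_def by auto
qed

lemma card_collinear_in_le:
  assumes "a \<in> P" "D \<subseteq> P"
  shows "card {p\<in>D. collinear a p} \<le> links a D * (r - 1)"
proof -
  have "{p\<in>D. collinear a p} \<subseteq> (\<Union>c\<in>lines_through a \<inter> lines_meeting D. points_on c - {a})"
    using assms(2) by (fastforce simp: collinear_def lines_through_def lines_meeting_def points_on_def)
  then have "card {p\<in>D. collinear a p} \<le> card (\<Union>c\<in>lines_through a \<inter> lines_meeting D. points_on c - {a})"
    by (rule card_mono[rotated]) (simp add: finite_lines_through finite_points_on)
  also have "\<dots> \<le> (\<Sum>c\<in>lines_through a \<inter> lines_meeting D. card (points_on c - {a}))"
    by (rule card_UN_le) (simp add: finite_lines_through)
  also have "\<dots> \<le> (\<Sum>c\<in>lines_through a \<inter> lines_meeting D. r - 1)"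
    by (rule sum_mono) (use card_points_on_minus_le assms(1) in blast)
  also have "\<dots> = links a D * (r - 1)" by (simp add: links_def)
  finally show ?thesis .
qed

lemma card_component_off_ge:
  assumes reg: "\<forall>p\<in>P. card {q. collinear p q} = r * (r - 1)" and y: "y \<in> P - {a, b}"
  shows "r * (r - 1) \<le> card (component_off a b y) + 1"
proof -
  define D where "D = component_off a b y"
  have fin: "finite D" unfolding D_def by (rule finite_component_off[OF y])
  have yD: "y \<in> D" unfolding D_def by (rule component_off_refl)
  have "{q. collinear y q} \<subseteq> (D - {y}) \<union> {a, b}"
    using component_off_closed[OF component_off_refl y] collinear_irrefl
    unfolding D_def by (auto simp: irreflp_def)
  then have "card {q. collinear y q} \<le> card ((D - {y}) \<union> {a, b})"
    by (rule card_mono[rotated]) (use fin in simp)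
  also have "\<dots> \<le> card (D - {y}) + card {a, b}" by (rule card_Un_le)
  also have "\<dots> \<le> (card D - 1) + 2" using fin yD by (simp add: card_insert_le_m1)
  also have "\<dots> = card D + 1" using card_gt_0_iff[of D] fin yD by auto
  finally show ?thesis using reg y D_def by simp
qed

definition distance_two :: "'p \<Rightarrow> 'p \<Rightarrow> bool" where
  "distance_two a b \<longleftrightarrow> a \<noteq> b \<and> \<not> collinear a b \<and> (\<exists>\<rho>. collinear \<rho> a \<and> collinear \<rho> b)"

definition max_component_off :: "'p \<Rightarrow> 'p \<Rightarrow> nat" where
  "max_component_off a b = Max ((\<lambda>x. card (component_off a b x)) ` (P - {a, b}))"

lemma card_component_off_le_max: "x \<in> P - {a, b} \<Longrightarrow> card (component_off a b x) \<le> max_component_off a b"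
  unfolding max_component_off_def using finite_points by (intro Max_ge) auto

lemma max_component_off_attained:
  "P - {a, b} \<noteq> {} \<Longrightarrow> \<exists>x\<in>P - {a, b}. card (component_off a b x) = max_component_off a b"
  unfolding max_component_off_def using finite_points Max_in[of "(\<lambda>x. card (component_off a b x)) ` (P - {a, b})"]
  by fastforce

lemma distance_two_witness:
  assumes "distance_two a b"
  obtains \<rho> where "\<rho> \<in> P - {a, b}" "collinear \<rho> a" "collinear \<rho> b" "a \<in> P" "b \<in> P"
  using assms collinear_irrefl collinear_in_points unfolding distance_two_def irreflp_def by blast

lemma exists_max_distance_two:
  assumes "distance_two a0 b0"
  obtains a b where "distance_two a b"
    "\<And>a' b'. distance_two a' b' \<Longrightarrow> max_component_off a' b' \<le> max_component_off a b"
proof -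
  have "max_component_off a b < Suc (card P)" if d2: "distance_two a b" for a b
  proof -
    obtain \<rho> where "\<rho> \<in> P - {a, b}" using distance_two_witness[OF d2] by blast
    then obtain x where "x \<in> P - {a, b}" "card (component_off a b x) = max_component_off a b"
      using max_component_off_attained by blast
    moreover have "card (component_off a b x) \<le> card P"
      using component_off_subset[OF \<open>x \<in> P - {a, b}\<close>] by (intro card_mono[OF finite_points]) auto
    ultimately show ?thesis by simp
  qed
  then show ?thesis
    using ex_has_greatest_nat[of "\<lambda>(a, b). distance_two a b" "(a0, b0)"
        "\<lambda>(a, b). max_component_off a b" "Suc (card P)"] assms that
    by force
qed

lemma component_off_commute: "component_off b a = component_off a b"
  unfolding component_off_def collinear_off_def by (simp add: insert_commute)

lemma r_square_bound: "(r - 1) * (r - 1) + 1 < r * (r - 1)"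
proof -
  obtain t where "r = t + 3" using r_ge_3 by (metis add.commute le_Suc_ex)
  then show ?thesis by (simp add: algebra_simps)
qed

lemma exists_collinear_edge_leaving_collinear_points:
  assumes conn: collinearity_connected and reg: "\<forall>p\<in>P. card {q. collinear p q} = r * (r - 1)"
    and ab: "a \<in> P" "b \<in> P" "a \<noteq> b"
    and x: "x \<in> P - {a, b}" and y: "y \<in> P - {a, b}" "y \<notin> component_off a b x"
  obtains q s where "q \<in> component_off a b y" "s \<in> component_off a b y"
    "collinear a q" "\<not> collinear a s" "collinear q s"
proof -
  define D where "D = component_off a b y"
  define A where "A = {p\<in>D. collinear a p}"
  have DP: "D \<subseteq> P - {a, b}" unfolding D_def by (rule component_off_subset[OF y(1)])
  have fin: "finite D" unfolding D_def by (rule finite_component_off[OF y(1)])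
  have "x \<notin> component_off a b y" using y(2) component_off_sym by blast
  then have "links a (component_off a b x) \<noteq> 0" "links a D \<noteq> 0"
    using links_ne_0_if_two_components[OF conn ab] x y D_def by blast+
  moreover have "links a (component_off a b x) + links a D \<le> r"
    using links_le_card_lines_through[OF ab(1) lines_meeting_components_disjoint[OF x y]] D_def by simp
  ultimately have "links a D \<le> r - 1" by linarith
  then have "card A \<le> (r - 1) * (r - 1)"
    using card_collinear_in_le[OF ab(1), of D] DP A_def mult_le_mono1 order_trans by blast
  then have "card A < card D"
    using card_component_off_ge[OF reg y(1)] r_square_bound unfolding D_def by linarith
  then have "\<not> A \<supseteq> D" using card_mono[of A D] fin A_def by fastforce
  then obtain s where s: "s \<in> D" "s \<notin> A" by blast
  have "lines_through a \<inter> lines_meeting D \<noteq> {}"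
    using \<open>links a D \<noteq> 0\<close> unfolding links_def by (metis card.empty)
  then obtain c q0 where c: "c \<in> lines_through a" "c \<in> C" "q0 \<in> D" "inc q0 c"
    unfolding lines_meeting_def by blast
  have "q0 \<in> A" using c DP ab(1) by (auto simp: A_def collinear_def lines_through_def)
  \<comment> \<open>walk inside D from q0 to s until the walk first leaves A\<close>
  have "(collinear_off a b)\<^sup>*\<^sup>* q0 s"
    using s(1) c(3) component_off_sym component_off_trans D_def unfolding component_off_def by blast
  then obtain u v where uv: "(collinear_off a b)\<^sup>*\<^sup>* q0 u" "collinear_off a b u v" "u \<in> A" "v \<notin> A"
    using rtranclp_leaves_set \<open>q0 \<in> A\<close> s(2) by metis
  then have "u \<in> D" "v \<in> D"
    using c(3) component_off_trans D_def unfolding component_off_def by auto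
  then show ?thesis using that uv A_def D_def collinear_off_def by blast
qed

lemma component_off_grows:
  assumes x: "x \<in> P - {a, b}" and b: "b \<in> P" "b \<noteq> a"
    and s: "s \<in> P - {a, b}" "s \<notin> component_off a b x"
    and links: "links b (component_off a b x) \<noteq> 0"
  shows "insert b (component_off a b x) \<subseteq> component_off a s x"
proof -
  have sub: "component_off a b x \<subseteq> component_off a s x"
  proof
    fix z assume "z \<in> component_off a b x"
    then have "(collinear_off a b)\<^sup>*\<^sup>* x z" unfolding component_off_def by simp
    then show "z \<in> component_off a s x"
    proof (induction rule: rtranclp_induct)
      case base
      show ?case by (rule component_off_refl)
    next
      case (step u v)
      then have "u \<in> component_off a b x" "v \<in> component_off a b x"
        unfolding component_off_def by auto
      then have "collinear_off a s u v"
        using step(2) s(2) unfolding collinear_off_def by auto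
      then show ?case using step(3) unfolding component_off_def by simp
    qed
  qed
  have "lines_through b \<inter> lines_meeting (component_off a b x) \<noteq> {}"
    using links unfolding links_def by (metis card.empty)
  then obtain c p where c: "c \<in> C" "inc b c" "p \<in> component_off a b x" "inc p c"
    unfolding lines_through_def lines_meeting_def by blast
  have "p \<in> P - {a, b}" using c(3) component_off_subset[OF x] by auto
  then have "collinear_off a s p b"
    using c b s component_off_subset[OF x] by (auto simp: collinear_off_def collinear_def)
  moreover have "(collinear_off a s)\<^sup>*\<^sup>* x p" using sub c(3) unfolding component_off_def by blast
  ultimately have "b \<in> component_off a s x" unfolding component_off_def by simp
  then show ?thesis using sub by blast
qed

lemma component_off_eq_if_max:
  assumes conn: collinearity_connected and reg: "\<forall>p\<in>P. card {q. collinear p q} = r * (r - 1)"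
    and d2: "distance_two a b"
    and max: "\<And>a' b'. distance_two a' b' \<Longrightarrow> max_component_off a' b' \<le> max_component_off a b"
    and y: "y \<in> P - {a, b}"
  shows "component_off a b y = P - {a, b}"
proof (rule ccontr)
  assume "component_off a b y \<noteq> P - {a, b}"
  then obtain z where z: "z \<in> P - {a, b}" "z \<notin> component_off a b y"
    using component_off_subset[OF y] by blast
  obtain a1 where "a1 \<in> P - {a, b}" using distance_two_witness[OF d2] by metis
  then obtain x where x: "x \<in> P - {a, b}" "card (component_off a b x) = max_component_off a b"
    using max_component_off_attained by blast
  have ab: "a \<in> P" "b \<in> P" "a \<noteq> b" using d2 distance_two_witness distance_two_def by metis+
  obtain y1 where y1: "y1 \<in> P - {a, b}" "y1 \<notin> component_off a b x"
    using y z component_off_eq component_off_sym by metis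
  obtain q s where qs: "q \<in> component_off a b y1" "s \<in> component_off a b y1"
    "collinear a q" "\<not> collinear a s" "collinear q s"
    using exists_collinear_edge_leaving_collinear_points[OF conn reg ab x(1) y1] by blast
  have s: "s \<in> P - {a, b}" "s \<notin> component_off a b x"
    using qs(2) component_off_subset[OF y1(1)] y1(2) component_off_eq component_off_sym by blast+
  have "distance_two a s"
    using qs s collinear_sym unfolding distance_two_def by (metis DiffD2 insertI1 sympD)
  have "x \<notin> component_off b a y1" using y1(2) component_off_sym component_off_commute by metis
  then have "links b (component_off a b x) \<noteq> 0"
    using links_ne_0_if_two_components[of b a y1 x] conn ab y1 x component_off_commute by auto
  then have "insert b (component_off a b x) \<subseteq> component_off a s x"
    using component_off_grows[OF x(1) ab(2)] ab(3) s by auto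
  moreover have "x \<in> P - {a, s}" using x s component_off_refl by auto
  ultimately have "card (insert b (component_off a b x)) \<le> max_component_off a s"
    using card_mono[OF finite_component_off] card_component_off_le_max order_trans by metis
  moreover have "b \<notin> component_off a b x" using component_off_subset[OF x(1)] by auto
  ultimately have "card (component_off a b x) < max_component_off a s"
    using finite_component_off[OF x(1)] by simp
  then show False using max[OF \<open>distance_two a s\<close>] x(2) by simp
qed

lemma exists_distance_two:
  assumes conn: collinearity_connected and "\<not> pairwise_collinear"
  obtains a b where "distance_two a b"
proof -
  obtain p q where pq: "p \<in> P" "q \<in> P" "p \<noteq> q" "\<not> collinear p q"
    using assms(2) unfolding pairwise_collinear_def by blast
  have "collinear\<^sup>*\<^sup>* p q" using conn pq unfolding collinearity_connected_def by blast
  then have "q = p \<or> collinear p q \<or> (\<exists>a b. distance_two a b)"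
  proof (induction rule: rtranclp_induct)
    case (step y z)
    then show ?case
      using collinear_sym collinear_irrefl unfolding distance_two_def symp_def irreflp_def by metis
  qed simp
  then show ?thesis using pq that by blast
qed

lemma colouring_if_distance_two_connected:
  assumes reg: "\<forall>p\<in>P. card {q. collinear p q} = r * (r - 1)" and d2: "distance_two a b"
    and full: "\<forall>x\<in>P - {a, b}. component_off a b x = P - {a, b}"
  shows "\<exists>g. proper_colouring collinear (r * (r - 1)) g P"
proof -
  obtain \<rho> where \<rho>: "\<rho> \<in> P - {a, b}" "collinear \<rho> a" "collinear \<rho> b" and ab: "a \<in> P" "b \<in> P"
    using distance_two_witness[OF d2] by metis
  \<comment> \<open>give a and b the same colour and colour greedily towards \<rho>\<close>
  have "proper_colouring collinear (r * (r - 1)) (\<lambda>_. 0) {a, b}"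
    using d2 r_ge_3 collinear_sym collinear_irrefl
    unfolding proper_colouring_def distance_two_def by (auto simp: symp_def irreflp_def)
  moreover have "\<forall>p\<in>P - {a, b}. \<forall>q\<in>P - {a, b}. (collinear_off a b)\<^sup>*\<^sup>* p q"
    using full unfolding component_off_def by blast
  ultimately obtain f where f: "\<forall>x\<in>{a, b}. f x = 0"
    "proper_colouring collinear (r * (r - 1)) f ({a, b} \<union> (P - {a, b} - {\<rho>}))"
    using extend_colouring_connected_minus_point[of "P - {a, b}" "collinear_off a b" "{a, b}" "\<lambda>_. 0" \<rho>] \<rho>(1)
    by (auto simp: collinear_off_def collinear_def)
  have "{a, b} \<union> (P - {a, b} - {\<rho>}) = P - {\<rho>}" using \<rho>(1) ab by auto
  moreover have "card (f ` {q. collinear \<rho> q}) < r * (r - 1)"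
  proof -
    have N: "a \<in> {q. collinear \<rho> q} - {b}" "b \<in> {q. collinear \<rho> q}"
      using \<rho> d2 by (auto simp: distance_two_def)
    have "f ` {q. collinear \<rho> q} = insert (f b) (f ` ({q. collinear \<rho> q} - {b}))"
      using N(2) by (metis image_insert insert_Diff)
    also have "\<dots> = f ` ({q. collinear \<rho> q} - {b})"
      using imageI[OF N(1), of f] f(1) by (simp add: insert_absorb)
    finally have "f ` {q. collinear \<rho> q} = f ` ({q. collinear \<rho> q} - {b})" .
    moreover have "card ({q. collinear \<rho> q} - {b}) = r * (r - 1) - 1"
      using reg \<rho>(1) card_Diff_singleton[OF N(2)] by simp
    moreover have "card (f ` ({q. collinear \<rho> q} - {b})) \<le> card ({q. collinear \<rho> q} - {b})"
      using finite_collinear by (intro card_image_le) simp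
    moreover have "r * (r - 1) > 0" using r_ge_3 by simp
    ultimately show ?thesis by (metis diff_less le_less_trans less_one)
  qed
  ultimately show ?thesis using colouring_extend_to_point[of \<rho> f] \<rho>(1) f(2) by auto
qed

lemma large_noncollinear_set_or_pairwise_collinear:
  assumes conn: collinearity_connected
  shows "(\<exists>T. noncollinear_set T \<and> card P \<le> r * (r - 1) * card T) \<or> pairwise_collinear"
proof (cases "\<exists>d\<in>P. card {q. collinear d q} < r * (r - 1)")
  case True
  then show ?thesis using large_noncollinear_set_if_deficient[OF conn] by blast
next
  case False
  then have reg: "\<forall>p\<in>P. card {q. collinear p q} = r * (r - 1)"
    using card_collinear_le le_neq_implies_less by blast
  show ?thesis
  proof (rule disjCI)
    assume "\<not> pairwise_collinear"
    then obtain a0 b0 where "distance_two a0 b0" using exists_distance_two[OF conn] by blast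
    then obtain a b where "distance_two a b"
      "\<And>a' b'. distance_two a' b' \<Longrightarrow> max_component_off a' b' \<le> max_component_off a b"
      using exists_max_distance_two by blast
    then have "\<exists>g. proper_colouring collinear (r * (r - 1)) g P"
      using colouring_if_distance_two_connected[OF reg] component_off_eq_if_max[OF conn reg] by blast
    then show "\<exists>T. noncollinear_set T \<and> card P \<le> r * (r - 1) * card T"
      using large_noncollinear_set_of_colouring by blast
  qed
qed

lemma large_noncollinear_set_or_complete:
  assumes conn: collinearity_connected and ne: "P \<noteq> {}"
  shows "(\<exists>T. noncollinear_set T \<and> card P \<le> r * (r - 1) * card T)
    \<or> (pairwise_collinear \<and> card P = r * (r - 1) + 1)"
proof -
  obtain x where x: "x \<in> P" using ne by blast
  have bound: "card P \<le> r * (r - 1) + 1" if pairwise_collinear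
  proof -
    have "P \<subseteq> insert x {q. collinear x q}"
      using x that unfolding pairwise_collinear_def by auto
    then have "card P \<le> card (insert x {q. collinear x q})"
      by (intro card_mono) (simp add: finite_collinear)
    also have "\<dots> \<le> card {q. collinear x q} + 1"
      using finite_collinear by (simp add: card_insert_if)
    finally show ?thesis using card_collinear_le[OF x] by simp
  qed
  have single: "noncollinear_set {x}"
    using x collinear_irrefl unfolding noncollinear_set_def irreflp_def by blast
  show ?thesis
  proof (cases pairwise_collinear)
    case True
    then have "card P = r * (r - 1) + 1 \<or> card P \<le> r * (r - 1) * card {x}"
      using bound by fastforce
    then show ?thesis using True single by blast
  qed (use large_noncollinear_set_or_pairwise_collinear[OF conn] in blast)
qed

lemma lines_through_meet_only_at:
  assumes p: "p \<in> P" and reg: "card {q. collinear p q} = r * (r - 1)"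
    and c: "c1 \<in> lines_through p" "c2 \<in> lines_through p" "c1 \<noteq> c2"
    and q: "q \<in> points_on c1" "q \<in> points_on c2"
  shows "q = p"
proof (rule ccontr)
  assume qp: "q \<noteq> p"
  \<comment> \<open>q would be counted twice among the neighbours of p\<close>
  have "{q'. collinear p q'} \<subseteq> (\<Union>c\<in>lines_through p - {c2}. points_on c - {p}) \<union> (points_on c2 - {p, q})"
    using q c by (auto simp: collinear_def lines_through_def points_on_def)
  then have "card {q'. collinear p q'}
      \<le> card ((\<Union>c\<in>lines_through p - {c2}. points_on c - {p}) \<union> (points_on c2 - {p, q}))"
    by (rule card_mono[rotated]) (simp add: finite_lines_through finite_points_on)
  also have "\<dots> \<le> card (\<Union>c\<in>lines_through p - {c2}. points_on c - {p}) + card (points_on c2 - {p, q})"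
    by (rule card_Un_le)
  also have "card (\<Union>c\<in>lines_through p - {c2}. points_on c - {p})
      \<le> (\<Sum>c\<in>lines_through p - {c2}. card (points_on c - {p}))"
    by (rule card_UN_le) (simp add: finite_lines_through)
  also have "\<dots> \<le> (\<Sum>c\<in>lines_through p - {c2}. r - 1)"
    by (rule sum_mono) (use card_points_on_minus_le p in blast)
  also have "\<dots> = (r - 1) * (r - 1)"
    using card_lines_through[OF p] c(2) card_Diff_singleton by simp
  also have "card (points_on c2 - {p, q}) = r - 2"
  proof -
    have sub: "{p, q} \<subseteq> points_on c2" and c2: "c2 \<in> C"
      using c(2) q(2) p by (auto simp: lines_through_def points_on_def)
    have "card (points_on c2 - {p, q}) = card (points_on c2) - card {p, q}"
      using sub by (intro card_Diff_subset) auto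
    then show ?thesis using card_points_on[OF c2] qp by simp
  qed
  finally have "r * (r - 1) \<le> (r - 1) * (r - 1) + (r - 2)" using reg by simp
  moreover obtain t where "r = t + 3" using r_ge_3 by (metis add.commute le_Suc_ex)
  ultimately show False by (simp add: algebra_simps)
qed

lemma card_points_eq_card_lines: "card P = card C"
proof -
  have "lines_meeting P = C"
  proof -
    have "points_on c \<noteq> {}" if "c \<in> C" for c using card_points_on[OF that] r_ge_3 by auto
    then show ?thesis by (auto simp: lines_meeting_def points_on_def)
  qed
  then have "r * card P = r * card C"
    using double_count_incidences[of P] card_points_on_line by auto
  then show ?thesis using r_ge_3 by simp
qed

lemma card_collinear_if_pairwise_collinear:
  assumes pairwise_collinear and "card P = r * (r - 1) + 1" and p: "p \<in> P"
  shows "card {q. collinear p q} = r * (r - 1)"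
proof -
  have "{q. collinear p q} = P - {p}"
    using assms unfolding pairwise_collinear_def collinear_def by auto
  then show ?thesis using assms by simp
qed

lemma pairwise_collinear_unique_line:
  assumes pc: pairwise_collinear and cP: "card P = r * (r - 1) + 1"
    and p: "p1 \<in> P" "p2 \<in> P" "p1 \<noteq> p2"
  shows "\<exists>!c. c \<in> C \<and> inc p1 c \<and> inc p2 c"
proof -
  have reg: "card {q. collinear p1 q} = r * (r - 1)"
    using card_collinear_if_pairwise_collinear[OF pc cP p(1)] .
  obtain c where "c \<in> C" "inc p1 c" "inc p2 c"
    using pc p unfolding pairwise_collinear_def collinear_def by blast
  moreover have "c' = c" if "c' \<in> C" "inc p1 c'" "inc p2 c'" "c \<in> C" "inc p1 c" "inc p2 c" for c c'
    using lines_through_meet_only_at[OF p(1) reg, of c' c p2] that p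
    by (auto simp: lines_through_def points_on_def)
  ultimately show ?thesis by blast
qed

lemma card_lines_meeting_line:
  assumes reg: "\<forall>p\<in>P. card {q. collinear p q} = r * (r - 1)" and c: "c \<in> C"
  shows "card {c'\<in>C. c' \<noteq> c \<and> (\<exists>p\<in>P. inc p c \<and> inc p c')} = r * (r - 1)"
proof -
  have eq: "{c'\<in>C. c' \<noteq> c \<and> (\<exists>p\<in>P. inc p c \<and> inc p c')} = (\<Union>p\<in>points_on c. lines_through p - {c})"
    by (auto simp: points_on_def lines_through_def)
  \<comment> \<open>two points of c share no other line\<close>
  have disj: "(lines_through p - {c}) \<inter> (lines_through p' - {c}) = {}"
    if "p \<in> points_on c" "p' \<in> points_on c" "p \<noteq> p'" for p p'
    using that c lines_through_meet_only_at[OF _ bspec[OF reg], of p' c _ p] 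
    by (fastforce simp: points_on_def lines_through_def)
  have "card (\<Union>p\<in>points_on c. lines_through p - {c}) = (\<Sum>p\<in>points_on c. card (lines_through p - {c}))"
    by (rule card_UN_disjoint) (use finite_points_on finite_lines_through disj in auto)
  also have "\<dots> = (\<Sum>p\<in>points_on c. r - 1)"
    using c card_lines_through by (intro sum.cong) (auto simp: points_on_def lines_through_def card_Diff_singleton)
  also have "\<dots> = r * (r - 1)" using card_points_on[OF c] by simp
  finally show ?thesis using eq by simp
qed

lemma pairwise_collinear_unique_point:
  assumes pc: pairwise_collinear and cP: "card P = r * (r - 1) + 1"
    and c: "c1 \<in> C" "c2 \<in> C" "c1 \<noteq> c2"
  shows "\<exists>!p. p \<in> P \<and> inc p c1 \<and> inc p c2"
proof -
  have reg: "\<forall>p\<in>P. card {q. collinear p q} = r * (r - 1)"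
    using card_collinear_if_pairwise_collinear[OF pc cP] by blast
  have "{c'\<in>C. c' \<noteq> c1 \<and> (\<exists>p\<in>P. inc p c1 \<and> inc p c')} = C - {c1}"
    using card_lines_meeting_line[OF reg c(1)] card_points_eq_card_lines cP c(1) finite_lines
    by (intro card_subset_eq) (auto simp: card_Diff_singleton)
  then obtain p where "p \<in> P" "inc p c1" "inc p c2" using c by blast
  moreover have "p' = p" if "p' \<in> P" "inc p' c1" "inc p' c2" "p \<in> P" "inc p c1" "inc p c2" for p p'
    using lines_through_meet_only_at[of p c1 c2 p'] reg that c
    by (auto simp: lines_through_def points_on_def)
  ultimately show ?thesis by blast
qed

lemma proj_plane_if_pairwise_collinear:
  assumes pairwise_collinear and "card P = r * (r - 1) + 1"
  shows "proj_plane P C inc (r - 1)"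
  using assms proj_plane_order_identity[of r] r_ge_3 finite_points finite_lines card_points_eq_card_lines
    card_lines_through_point card_points_on_line pairwise_collinear_unique_line
    pairwise_collinear_unique_point
  unfolding proj_plane_def by auto

end

section \<open>Regular friendship graphs\<close>

lemma rotate1_eq_if_rotate_coprime_eq:
  assumes k: "coprime k (length ys)" "k \<noteq> 0" and rk: "rotate k ys = ys"
  shows "rotate1 ys = ys"
proof -
  have mult: "rotate (k * j) ys = ys" for j
    by (induction j) (simp_all add: rotate_rotate[symmetric] rk add.commute)
  obtain x y where "k * x = length ys * y + gcd k (length ys)" using bezout_nat[OF k(2)] by blast
  then have kx: "k * x = length ys * y + 1" using k(1) by simp
  have "rotate (k * x) ys = rotate ((k * x) mod length ys) ys" by (rule rotate_conv_mod)
  also have "(k * x) mod length ys = 1 mod length ys" unfolding kx by (metis add.commute mod_mult_self2)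
  also have "rotate (1 mod length ys) ys = rotate 1 ys" by (rule rotate_conv_mod[symmetric])
  finally show ?thesis using mult by simp
qed

definition rotations :: "'a list \<Rightarrow> 'a list set" where
  "rotations ys = range (\<lambda>k. rotate k ys)"

lemma rotations_refl: "ys \<in> rotations ys"
  unfolding rotations_def using rangeI[of "\<lambda>k. rotate k ys" 0] by simp

lemma rotations_subset: "w \<in> rotations ys \<Longrightarrow> rotations w \<subseteq> rotations ys"
  unfolding rotations_def by (auto simp: rotate_rotate)

lemma rotations_eq: "w \<in> rotations ys \<Longrightarrow> rotations w = rotations ys"
proof -
  assume w: "w \<in> rotations ys"
  then obtain k where k: "w = rotate k ys" unfolding rotations_def by blast
  have "ys = rotate (length ys - k mod length ys) w"
  proof (cases "ys = []")
    case False
    then have "(length ys - k mod length ys + k) mod length ys = 0"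
      by (metis add.commute mod_add_left_eq mod_less_divisor length_greater_0_conv
          le_add_diff_inverse2 less_imp_le mod_self)
    then show ?thesis unfolding k rotate_rotate by (metis rotate_conv_mod rotate0 id_apply)
  qed (simp add: k)
  then have "ys \<in> rotations w" unfolding rotations_def by blast
  then show ?thesis using rotations_subset w by blast
qed

lemma card_rotations_prime:
  assumes p: "prime (length ys)" and nc: "rotate1 ys \<noteq> ys"
  shows "card (rotations ys) = length ys"
proof -
  let ?p = "length ys"
  have "rotations ys = (\<lambda>k. rotate k ys) ` {..<?p}"
  proof (intro equalityI subsetI)
    fix z assume "z \<in> rotations ys"
    then obtain k where "z = rotate k ys" unfolding rotations_def by blast
    then show "z \<in> (\<lambda>k. rotate k ys) ` {..<?p}"
      using prime_gt_0_nat[OF p] rotate_conv_mod[of k ys] by auto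
  qed (auto simp: rotations_def)
  moreover have "inj_on (\<lambda>k. rotate k ys) {..<?p}"
  proof (rule linorder_inj_onI', rule notI)
    fix i j assume ij: "j \<in> {..<?p}" "i < j" and eq: "rotate i ys = rotate j ys"
    \<comment> \<open>rotating by the difference fixes ys, and the difference is prime to ?p\<close>
    have "rotate (?p - j + i) ys = rotate (?p - j) (rotate i ys)" by (simp add: rotate_rotate)
    also have "\<dots> = rotate (?p - j) (rotate j ys)" using eq by simp
    also have "\<dots> = ys" using ij by (simp add: rotate_rotate)
    finally have "rotate (?p - j + i) ys = ys" .
    moreover have "coprime (?p - j + i) ?p" "?p - j + i \<noteq> 0"
      using ij p by (auto simp: prime_imp_coprime_nat coprime_commute nat_dvd_not_less)
    ultimately show False using rotate1_eq_if_rotate_coprime_eq nc by blast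
  qed
  ultimately show ?thesis by (simp add: card_image)
qed

lemma prime_dvd_card_if_rotation_closed:
  assumes p: "prime p" and fin: "finite S"
    and closed: "\<And>ys. ys \<in> S \<Longrightarrow> length ys = p \<and> rotate1 ys \<in> S"
    and nc: "\<And>ys. ys \<in> S \<Longrightarrow> rotate1 ys \<noteq> ys"
  shows "p dvd card S"
proof -
  have "rotate k ys \<in> S" if "ys \<in> S" for ys k
    using that closed by (induction k) (auto simp: rotate_Suc)
  then have S: "\<Union>(rotations ` S) = S"
    using rotations_refl unfolding rotations_def by blast
  have "p dvd card (\<Union>(rotations ` S))"
  proof (rule dvd_partition)
    show "finite (\<Union>(rotations ` S))" using S fin by simp
    show "\<forall>c\<in>rotations ` S. p dvd card c" using card_rotations_prime closed nc p by (metis dvd_refl imageE)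
    show "\<forall>c1\<in>rotations ` S. \<forall>c2\<in>rotations ` S. c1 \<noteq> c2 \<longrightarrow> c1 \<inter> c2 = {}"
      using rotations_eq by blast
  qed
  then show ?thesis using S by simp
qed

definition walks :: "'a set \<Rightarrow> ('a \<Rightarrow> 'a \<Rightarrow> bool) \<Rightarrow> nat \<Rightarrow> 'a \<Rightarrow> 'a \<Rightarrow> 'a list set" where
  "walks V E k v u = {xs. length xs = k \<and> set xs \<subseteq> V \<and> successively E (v # xs) \<and> last (v # xs) = u}"

lemma finite_walks: "finite V \<Longrightarrow> finite (walks V E k v u)"
  by (rule finite_subset[of _ "{xs. set xs \<subseteq> V \<and> length xs = k}"])
    (auto simp: walks_def intro: finite_lists_length_eq)

lemma walks_0: "walks V E 0 v u = (if u = v then {[]} else {})"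
  unfolding walks_def by auto

lemma successively_snoc:
  "successively E (v # ys @ [u]) \<longleftrightarrow> successively E (v # ys) \<and> E (last (v # ys)) u"
  using successively_append_iff[of E "v # ys" "[u]"] by simp

lemma walks_Suc:
  assumes u: "u \<in> V" and v: "v \<in> V"
  shows "walks V E (Suc k) v u = (\<Union>w\<in>{w\<in>V. E w u}. (\<lambda>xs. xs @ [u]) ` walks V E k v w)"
proof (intro equalityI subsetI)
  fix xs assume xs: "xs \<in> walks V E (Suc k) v u"
  then have "xs \<noteq> []" "last xs = u" unfolding walks_def by auto
  then obtain ys where ys: "xs = ys @ [u]" by (metis append_butlast_last_id)
  have "last (v # ys) \<in> V" using xs v ys by (auto simp: walks_def)
  then show "xs \<in> (\<Union>w\<in>{w\<in>V. E w u}. (\<lambda>xs. xs @ [u]) ` walks V E k v w)"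
    using xs successively_snoc[of E v ys u] unfolding ys walks_def by auto
qed (use u in \<open>auto simp: walks_def successively_snoc\<close>)

lemma card_walks_Suc:
  assumes fin: "finite V" and u: "u \<in> V" and v: "v \<in> V"
  shows "card (walks V E (Suc k) v u) = (\<Sum>w\<in>{w\<in>V. E w u}. card (walks V E k v w))"
proof -
  have "card (\<Union>w\<in>{w\<in>V. E w u}. (\<lambda>xs. xs @ [u]) ` walks V E k v w)
      = (\<Sum>w\<in>{w\<in>V. E w u}. card ((\<lambda>xs. xs @ [u]) ` walks V E k v w))"
    by (rule card_UN_disjoint) (simp_all add: fin finite_walks, auto simp: walks_def)
  moreover have "card ((\<lambda>xs. xs @ [u]) ` walks V E k v w) = card (walks V E k v w)" for w
    by (rule card_image) (auto simp: inj_on_def)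
  ultimately show ?thesis using walks_Suc[OF u v] by simp
qed

lemma card_walks_2:
  assumes sg: "simple_graph V E" and v: "v \<in> V" and u: "u \<in> V"
  shows "card (walks V E 2 v u) = card {w\<in>V. E v w \<and> E u w}"
proof -
  have fin: "finite V" using sg by (simp add: simple_graph_def)
  have one: "card (walks V E (Suc 0) v w) = (if E v w then 1 else 0)" if "w \<in> V" for w
  proof -
    have "card (walks V E (Suc 0) v w) = (\<Sum>w'\<in>{w'\<in>V. E w' w}. card (walks V E 0 v w'))"
      by (rule card_walks_Suc[OF fin that v])
    also have "\<dots> = (\<Sum>w'\<in>{w'\<in>V. E w' w}. if w' = v then 1 else 0)"
      by (intro sum.cong) (auto simp: walks_0)
    finally show ?thesis using fin v by (simp add: sum.delta)
  qed
  have "card (walks V E (Suc (Suc 0)) v u) = (\<Sum>w\<in>{w\<in>V. E w u}. card (walks V E (Suc 0) v w))"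
    by (rule card_walks_Suc[OF fin u v])
  also have "\<dots> = (\<Sum>w\<in>{w\<in>V. E w u}. if E v w then 1 else 0)"
    using one by (intro sum.cong) auto
  also have "\<dots> = card {w\<in>{w\<in>V. E w u}. E v w}"
    using fin by (simp add: sum.inter_filter[symmetric])
  also have "{w\<in>{w\<in>V. E w u}. E v w} = {w\<in>V. E v w \<and> E u w}"
    using sg unfolding simple_graph_def by blast
  finally show ?thesis by (simp add: numeral_2_eq_2)
qed

lemma card_walks_mod_friendship:
  assumes sg: "simple_graph V E" and reg: "regular V E r"
    and friend: "\<forall>u\<in>V. \<forall>v\<in>V. u \<noteq> v \<longrightarrow> (\<exists>!w. w \<in> V \<and> E u w \<and> E v w)"
    and r: "r mod p = 1" and k: "2 \<le> k" and v: "v \<in> V" and u: "u \<in> V"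
  shows "card (walks V E k v u) mod p = 1"
  using k u
proof (induction k arbitrary: u rule: dec_induct)
  case base
  \<comment> \<open>a closed 2-walk at v passes through any neighbour of v; otherwise the middle vertex is unique\<close>
  show ?case
  proof (cases "u = v")
    case True
    then have "{w\<in>V. E v w \<and> E u w} = nbhd V E v"
      using sg unfolding nbhd_def simple_graph_def by blast
    then show ?thesis using card_walks_2[OF sg v base] reg v r by (simp add: regular_def)
  next
    case False
    then have "\<exists>!w. w \<in> V \<and> E v w \<and> E u w" using friend v base by blast
    then obtain w where "{w'\<in>V. E v w' \<and> E u w'} = {w}" by blast
    moreover have "p \<noteq> 1" using r by auto
    then have "1 mod p = (1::nat)" by (cases "p = 0") auto
    ultimately show ?thesis using card_walks_2[OF sg v base] by simp
  qed
next
  case (step k)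
  have fin: "finite V" using sg by (simp add: simple_graph_def)
  have "card (walks V E (Suc k) v u) mod p = (\<Sum>w\<in>nbhd V E u. card (walks V E k v w) mod p) mod p"
    using card_walks_Suc[OF fin step.prems v] by (simp add: nbhd_def mod_sum_eq)
  also have "\<dots> = card (nbhd V E u) mod p" using step by (simp add: nbhd_def)
  finally show ?case using reg step.prems r by (simp add: regular_def)
qed

definition closed_walks :: "'a set \<Rightarrow> ('a \<Rightarrow> 'a \<Rightarrow> bool) \<Rightarrow> nat \<Rightarrow> 'a list set" where
  "closed_walks V E n = (\<Union>v\<in>V. walks V E n v v)"

lemma card_closed_walks:
  assumes "finite V" "n \<noteq> 0"
  shows "card (closed_walks V E n) = (\<Sum>v\<in>V. card (walks V E n v v))"
  unfolding closed_walks_def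
  by (rule card_UN_disjoint) (use assms in \<open>simp_all add: finite_walks, auto simp: walks_def\<close>)

lemma rotate1_closed_walks:
  assumes xs: "xs \<in> closed_walks V E n"
  shows "rotate1 xs \<in> closed_walks V E n"
proof (cases xs)
  case (Cons x zs)
  \<comment> \<open>a closed walk v, x, zs (ending in v) read from x on\<close>
  obtain v where v: "v \<in> V" "xs \<in> walks V E n v v" using xs unfolding closed_walks_def by blast
  then have "successively E (x # zs)" "E (last (x # zs)) x" "x \<in> V"
    using Cons by (auto simp: walks_def successively_Cons)
  then show ?thesis
    using v Cons unfolding closed_walks_def walks_def by (auto simp: successively_snoc)
qed (use xs in simp)

lemma rotate1_closed_walks_neq:
  assumes irr: "\<forall>v. \<not> E v v" and n: "2 \<le> n" and xs: "xs \<in> closed_walks V E n"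
  shows "rotate1 xs \<noteq> xs"
proof
  assume eq: "rotate1 xs = xs"
  obtain v where "xs \<in> walks V E n v v" using xs unfolding closed_walks_def by blast
  moreover have "length xs = n" using \<open>xs \<in> walks V E n v v\<close> by (simp add: walks_def)
  then obtain x y zs where xyz: "xs = x # y # zs"
    using n by (cases xs rule: remdups_adj.cases) auto
  ultimately have "E x y" by (simp add: walks_def)
  moreover have "x = y" using eq xyz by simp
  ultimately show False using irr by simp
qed

theorem no_regular_friendship_graph:
  assumes sg: "simple_graph V E" and reg: "regular V E r" and r: "r \<ge> 3"
    and friend: "\<forall>u\<in>V. \<forall>v\<in>V. u \<noteq> v \<longrightarrow> (\<exists>!w. w \<in> V \<and> E u w \<and> E v w)"
    and card_V: "card V = r * (r - 1) + 1"
  shows False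
proof -
  have fin: "finite V" and irr: "\<forall>v. \<not> E v v" using sg by (auto simp: simple_graph_def)
  have "r - 1 \<noteq> 1" using r by simp
  then obtain p where p: "prime p" "p dvd r - 1" using prime_factor_nat by blast
  have "Suc (r - 1) mod p = 1" using p prime_gt_1_nat[OF p(1)] by (simp add: mod_Suc)
  then have "r mod p = 1" using r by simp
  \<comment> \<open>count closed walks of length p modulo p in two ways\<close>
  then have "card (closed_walks V E p) mod p = (\<Sum>v\<in>V. card (walks V E p v v) mod p) mod p"
    using card_closed_walks[OF fin] prime_gt_0_nat[OF p(1)] by (simp add: mod_sum_eq)
  also have "\<dots> = card V mod p"
    using card_walks_mod_friendship[OF sg reg friend \<open>r mod p = 1\<close>] prime_ge_2_nat[OF p(1)] by simp
  also have "\<dots> = 1" using card_V p prime_gt_1_nat[OF p(1)] by (simp add: mod_Suc)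
  finally have "card (closed_walks V E p) mod p = 1" .
  moreover have "p dvd card (closed_walks V E p)"
  proof (rule prime_dvd_card_if_rotation_closed[OF p(1)])
    show "finite (closed_walks V E p)"
      using fin by (simp add: closed_walks_def finite_walks)
    fix ys assume ys: "ys \<in> closed_walks V E p"
    then show "length ys = p \<and> rotate1 ys \<in> closed_walks V E p"
      using rotate1_closed_walks[OF ys] by (auto simp: closed_walks_def walks_def)
    show "rotate1 ys \<noteq> ys" using rotate1_closed_walks_neq[OF irr _ ys] prime_ge_2_nat[OF p(1)] by blast
  qed
  ultimately show False using prime_gt_1_nat[OF p(1)] by simp
qed

section \<open>Packings and tuple total domination\<close>

definition packing :: "'a set \<Rightarrow> ('a \<Rightarrow> 'a \<Rightarrow> bool) \<Rightarrow> 'a set \<Rightarrow> bool" where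
  "packing V E T \<longleftrightarrow> T \<subseteq> V \<and> (\<forall>w\<in>V. \<forall>x\<in>T. \<forall>y\<in>T. E x w \<longrightarrow> E y w \<longrightarrow> x = y)"

lemma packing_iff_card_nbhd:
  assumes "finite V"
  shows "packing V E T \<longleftrightarrow> T \<subseteq> V \<and> (\<forall>w\<in>V. card (nbhd V E w \<inter> T) \<le> 1)"
proof -
  have "finite (nbhd V E w \<inter> T)" for w using assms by (simp add: nbhd_def)
  then show ?thesis
    unfolding packing_def nbhd_def by (auto simp: card_le_Suc0_iff_eq) blast
qed

lemma ktuple_tds_iff_packing_compl:
  assumes fin: "finite V" and reg: "regular V E r" and S: "S \<subseteq> V"
  shows "ktuple_tds V E (r - 1) S \<longleftrightarrow> packing V E (V - S)"
proof -
  have "card (nbhd V E w \<inter> S) + card (nbhd V E w \<inter> (V - S)) = r" if "w \<in> V" for w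
  proof -
    have "nbhd V E w = (nbhd V E w \<inter> S) \<union> (nbhd V E w \<inter> (V - S))" by (auto simp: nbhd_def)
    moreover have "card ((nbhd V E w \<inter> S) \<union> (nbhd V E w \<inter> (V - S)))
        = card (nbhd V E w \<inter> S) + card (nbhd V E w \<inter> (V - S))"
      using fin by (intro card_Un_disjoint) (auto simp: nbhd_def)
    ultimately have "card (nbhd V E w) = card (nbhd V E w \<inter> S) + card (nbhd V E w \<inter> (V - S))"
      by simp
    then show ?thesis using reg that by (simp add: regular_def)
  qed
  then show ?thesis
    unfolding ktuple_tds_def packing_iff_card_nbhd[OF fin] using S by fastforce
qed

lemma finite_ktuple_tds_cards: "finite V \<Longrightarrow> finite {card S |S. ktuple_tds V E k S}"
  by (auto simp: ktuple_tds_def intro: finite_surj[of "Pow V" _ card])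

lemma ktuple_tdn_le_card_minus_packing:
  assumes fin: "finite V" and reg: "regular V E r" and T: "packing V E T"
  shows "ktuple_tdn V E (r - 1) \<le> card V - card T"
proof -
  have TV: "T \<subseteq> V" using T by (simp add: packing_def)
  then have "ktuple_tds V E (r - 1) (V - T)"
    using ktuple_tds_iff_packing_compl[OF fin reg] T by (simp add: double_diff)
  moreover have "finite {card S |S. ktuple_tds V E (r - 1) S}"
    using fin by (rule finite_ktuple_tds_cards)
  ultimately have "ktuple_tdn V E (r - 1) \<le> card (V - T)"
    unfolding ktuple_tdn_def by (intro Min_le) auto
  then show ?thesis using TV fin by (simp add: card_Diff_subset finite_subset)
qed

lemma ktuple_tdn_eq_card_minus_max_packing:
  assumes fin: "finite V" and reg: "regular V E r" and T: "packing V E T"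
    and max: "\<And>T'. packing V E T' \<Longrightarrow> card T' \<le> card T"
  shows "ktuple_tdn V E (r - 1) = card V - card T"
proof -
  have tds: "ktuple_tds V E (r - 1) V"
    using ktuple_tds_iff_packing_compl[OF fin reg] by (simp add: packing_def)
  have "finite {card S |S. ktuple_tds V E (r - 1) S}"
    using fin by (rule finite_ktuple_tds_cards)
  then obtain S where S: "ktuple_tds V E (r - 1) S" "card S = ktuple_tdn V E (r - 1)"
    using Min_in[of "{card S |S. ktuple_tds V E (r - 1) S}"] tds unfolding ktuple_tdn_def by fastforce
  have SV: "S \<subseteq> V" using S(1) by (simp add: ktuple_tds_def)
  then have "card (V - S) \<le> card T" using max ktuple_tds_iff_packing_compl[OF fin reg SV] S(1) by blast
  then have "card V - card T \<le> card S" using SV fin by (simp add: card_Diff_subset finite_subset)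
  then show ?thesis using ktuple_tdn_le_card_minus_packing[OF fin reg T] S(2) by linarith
qed

lemma packing_image_iff:
  assumes iso: "graph_iso V E V' E' f" and T: "T \<subseteq> V"
  shows "packing V' E' (f ` T) \<longleftrightarrow> packing V E T"
proof -
  have bij: "bij_betw f V V'" and adj: "\<forall>u\<in>V. \<forall>v\<in>V. E u v \<longleftrightarrow> E' (f u) (f v)"
    using iso by (auto simp: graph_iso_def)
  have img: "f ` V = V'" and inj: "inj_on f V" using bij by (auto simp: bij_betw_def)
  have "f ` T \<subseteq> V'" using T img by blast
  moreover have "(\<forall>w'\<in>V'. \<forall>x'\<in>f ` T. \<forall>y'\<in>f ` T. E' x' w' \<longrightarrow> E' y' w' \<longrightarrow> x' = y')
      \<longleftrightarrow> (\<forall>w\<in>V. \<forall>x\<in>T. \<forall>y\<in>T. E x w \<longrightarrow> E y w \<longrightarrow> x = y)"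
    using adj T inj unfolding img[symmetric] by (auto simp: inj_on_def subset_iff) metis
  ultimately show ?thesis using T unfolding packing_def by blast
qed

lemma packing_card_Int_le_1:
  assumes T: "packing V E T" and fin: "finite V"
    and A: "\<And>x y. x \<in> A \<Longrightarrow> y \<in> A \<Longrightarrow> x \<noteq> y \<Longrightarrow> \<exists>w\<in>V. E x w \<and> E y w"
  shows "card (T \<inter> A) \<le> 1"
proof -
  have "finite (T \<inter> A)" using T fin finite_subset by (auto simp: packing_def)
  moreover have "\<forall>x\<in>T \<inter> A. \<forall>y\<in>T \<inter> A. x = y" using T A unfolding packing_def by blast
  ultimately show ?thesis using card_le_Suc0_iff_eq by (metis One_nat_def)
qed

lemma card_inc_vertices:
  assumes "finite P" "finite L"
  shows "card (inc_vertices P L) = card P + card L"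
  unfolding inc_vertices_def using assms
  by (subst card_Un_disjoint) (auto simp: card_image)

lemma packing_inc_graph_card_le:
  fixes P :: "'p set" and L :: "'l set"
  assumes pp: "proj_plane P L I q" and T: "packing (inc_vertices P L) (inc_adj P L I) T"
  shows "card T \<le> 2"
proof -
  have "finite P" "finite L" using pp by (simp_all add: proj_plane_def)
  then have fin: "finite (inc_vertices P L)" by (simp add: inc_vertices_def)
  have lines: "\<forall>p1\<in>P. \<forall>p2\<in>P. p1 \<noteq> p2 \<longrightarrow> (\<exists>!l. l \<in> L \<and> I p1 l \<and> I p2 l)"
    and points: "\<forall>l1\<in>L. \<forall>l2\<in>L. l1 \<noteq> l2 \<longrightarrow> (\<exists>!p. p \<in> P \<and> I p l1 \<and> I p l2)"
    using pp by (simp_all add: proj_plane_def)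
  have "card (T \<inter> Inl ` P) \<le> 1"
  proof (rule packing_card_Int_le_1[OF T fin])
    fix x y :: "'p + 'l" assume "x \<in> Inl ` P" "y \<in> Inl ` P" "x \<noteq> y"
    then obtain p1 p2 l where "x = Inl p1" "y = Inl p2" "l \<in> L" "I p1 l" "I p2 l" "p1 \<in> P" "p2 \<in> P"
      using lines by blast
    then show "\<exists>w\<in>inc_vertices P L. inc_adj P L I x w \<and> inc_adj P L I y w"
      by (intro bexI[of _ "Inr l"]) (auto simp: inc_vertices_def)
  qed
  moreover have "card (T \<inter> Inr ` L) \<le> 1"
  proof (rule packing_card_Int_le_1[OF T fin])
    fix x y :: "'p + 'l" assume "x \<in> Inr ` L" "y \<in> Inr ` L" "x \<noteq> y"
    then obtain l1 l2 p where "x = Inr l1" "y = Inr l2" "p \<in> P" "I p l1" "I p l2" "l1 \<in> L" "l2 \<in> L"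
      using points by blast
    then show "\<exists>w\<in>inc_vertices P L. inc_adj P L I x w \<and> inc_adj P L I y w"
      by (intro bexI[of _ "Inl p"]) (auto simp: inc_vertices_def)
  qed
  moreover have "card T \<le> card ((T \<inter> Inl ` P) \<union> (T \<inter> Inr ` L))"
    using T fin by (intro card_mono) (auto simp: packing_def inc_vertices_def)
  ultimately show ?thesis using card_Un_le[of "T \<inter> Inl ` P" "T \<inter> Inr ` L"] by linarith
qed

lemma packing_point_line:
  assumes "p \<in> P" "l \<in> L"
  shows "packing (inc_vertices P L) (inc_adj P L I) {Inl p, Inr l}"
proof -
  have "\<not> (inc_adj P L I (Inl p) w \<and> inc_adj P L I (Inr l) w)" for w by (cases w) auto
  then show ?thesis using assms by (auto simp: packing_def inc_vertices_def)
qed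

lemma ktuple_tdn_proj_plane_incidence_graph:
  assumes fin: "finite V" and reg: "regular V E r" and r: "r \<ge> 1"
    and pp: "proj_plane P L I (r - 1)" and iso: "graph_iso V E (inc_vertices P L) (inc_adj P L I) f"
  shows "card V = 2 * (r * (r - 1) + 1)" and "ktuple_tdn V E (r - 1) = card V - 2"
proof -
  have bij: "bij_betw f V (inc_vertices P L)" using iso by (simp add: graph_iso_def)
  have cardPL: "card P = r * (r - 1) + 1" "card L = r * (r - 1) + 1" "finite P" "finite L"
    using pp proj_plane_order_identity[OF r] by (simp_all add: proj_plane_def)
  then show "card V = 2 * (r * (r - 1) + 1)"
    using bij_betw_same_card[OF bij] card_inc_vertices[of P L] by simp
  obtain p l where pl: "p \<in> P" "l \<in> L" using cardPL by fastforce
  define T where "T = inv_into V f ` {Inl p, Inr l}"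
  have fT: "f ` T = {Inl p, Inr l}" and TV: "T \<subseteq> V"
    using bij pl unfolding T_def inc_vertices_def
    by (auto simp: bij_betw_def f_inv_into_f inv_into_into image_iff)
  have "packing V E T" using packing_image_iff[OF iso TV] packing_point_line[OF pl] fT by simp
  moreover have "card T = 2"
    using fT card_image[OF inj_on_subset[OF bij_betw_imp_inj_on[OF bij] TV]] by simp
  moreover have "card T' \<le> 2" if "packing V E T'" for T'
  proof -
    have "T' \<subseteq> V" using that by (simp add: packing_def)
    then have "card (f ` T') = card T'" using bij card_image inj_on_subset by (metis bij_betw_def)
    then show ?thesis
      using packing_inc_graph_card_le[OF pp] packing_image_iff[OF iso \<open>T' \<subseteq> V\<close>] that by metis
  qed
  ultimately show "ktuple_tdn V E (r - 1) = card V - 2"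
    using ktuple_tdn_eq_card_minus_max_packing[OF fin reg] by metis
qed

lemma real_diff_le_fraction:
  fixes n t D :: nat
  assumes "n \<le> D * t" "t \<le> n" "0 < D"
  shows "real (n - t) \<le> (real D - 1) / real D * real n"
proof -
  have "real n \<le> real D * real t" using assms(1) by (metis of_nat_le_iff of_nat_mult)
  then have "(real n - real t) * real D \<le> (real D - 1) * real n" by (simp add: algebra_simps)
  then show ?thesis using assms(2,3) by (simp add: field_simps of_nat_diff)
qed

section \<open>Connected regular graphs\<close>

locale connected_regular_graph =
  fixes V :: "'a set" and E :: "'a \<Rightarrow> 'a \<Rightarrow> bool" and r :: nat
  assumes simple: "simple_graph V E" and nonempty: "V \<noteq> {}"
    and connected: "connected_graph V E" and regular: "regular V E r" and r_ge_3: "r \<ge> 3"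
begin

lemma finite_V: "finite V" and E_sym: "E u v \<Longrightarrow> E v u" and E_in_V: "E u v \<Longrightarrow> u \<in> V \<and> v \<in> V"
  using simple unfolding simple_graph_def by auto

lemma card_nbhd: "v \<in> V \<Longrightarrow> card (nbhd V E v) = r"
  using regular unfolding regular_def by blast

definition bipartition :: "'a set \<Rightarrow> 'a set \<Rightarrow> bool" where
  "bipartition X Y \<longleftrightarrow> X \<union> Y = V \<and> X \<inter> Y = {}
     \<and> (\<forall>u\<in>X. \<forall>w. E u w \<longrightarrow> w \<in> Y) \<and> (\<forall>u\<in>Y. \<forall>w. E u w \<longrightarrow> w \<in> X)"

lemma bipartition_swap: "bipartition X Y \<Longrightarrow> bipartition Y X"
  unfolding bipartition_def by blast

lemma nbhd_eq: "nbhd V E v = {w\<in>V. E v w}"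
  unfolding nbhd_def using E_sym by blast

lemma regular_incidence_bipartition:
  assumes XY: "bipartition X Y"
  shows "regular_incidence X Y E r"
proof
  have sub: "X \<subseteq> V" "Y \<subseteq> V" using XY unfolding bipartition_def by blast+
  then show "finite X" "finite Y" using finite_V finite_subset by blast+
  show "card {c\<in>Y. E p c} = r" if p: "p \<in> X" for p
  proof -
    have "{c\<in>Y. E p c} = {c\<in>V. E p c}" using XY p sub(2) unfolding bipartition_def by blast
    then show ?thesis using card_nbhd p sub(1) nbhd_eq by auto
  qed
  show "card {p\<in>X. E p c} = r" if c: "c \<in> Y" for c
  proof -
    have "{p\<in>X. E p c} = {p\<in>V. E p c}" using XY c sub(1) E_sym unfolding bipartition_def by blast
    then show ?thesis using card_nbhd c sub(2) by (auto simp: nbhd_def)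
  qed
qed (rule r_ge_3)

sublocale regular_incidence V V E r
proof
  show "card {c\<in>V. E p c} = r" if "p \<in> V" for p
    using card_nbhd[OF that] by (simp add: nbhd_eq)
  show "card {p\<in>V. E p c} = r" if "c \<in> V" for c
    using card_nbhd[OF that] by (simp add: nbhd_def)
qed (use finite_V r_ge_3 in auto)

lemma packing_iff_noncollinear_set: "packing V E T \<longleftrightarrow> noncollinear_set T"
  unfolding packing_def noncollinear_set_def collinear_def by blast

lemma bipartition_collinear_iff:
  assumes XY: "bipartition X Y" and p: "p \<in> X"
  shows "regular_incidence.collinear X Y E p q \<longleftrightarrow> collinear p q"
proof
  assume "regular_incidence.collinear X Y E p q"
  then show "collinear p q"
    using XY unfolding regular_incidence.collinear_def[OF regular_incidence_bipartition[OF XY]]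
      collinear_def bipartition_def by blast
next
  assume "collinear p q"
  then obtain c where c: "E p c" "E q c" "p \<noteq> q" unfolding collinear_def by blast
  then have "c \<in> Y" using XY p unfolding bipartition_def by blast
  moreover have "q \<in> X" using XY E_sym c \<open>c \<in> Y\<close> unfolding bipartition_def by blast
  ultimately show "regular_incidence.collinear X Y E p q"
    using p c unfolding regular_incidence.collinear_def[OF regular_incidence_bipartition[OF XY]] by blast
qed

lemma collinear_rtranclp_sym: "collinear\<^sup>*\<^sup>* x y \<Longrightarrow> collinear\<^sup>*\<^sup>* y x"
  using symp_rtranclp[OF collinear_sym] by (simp add: sympD)

lemma collinear_rtranclp_if_common_nbr:
  assumes "E y a" "E y b"
  shows "collinear\<^sup>*\<^sup>* a b"
proof (cases "a = b")
  case False
  then have "collinear a b" using assms E_sym E_in_V unfolding collinear_def by blast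
  then show ?thesis by simp
qed simp

lemma walk_ends_collinear:
  assumes "E\<^sup>*\<^sup>* x z"
  shows "collinear\<^sup>*\<^sup>* x z \<or> (\<exists>w. collinear\<^sup>*\<^sup>* x w \<and> E w z)"
  using assms
proof (induction rule: rtranclp_induct)
  case (step y z)
  then show ?case
    using collinear_rtranclp_if_common_nbr E_sym by (meson rtranclp_trans)
qed simp

lemma collinear_rtranclp_nbr:
  assumes "collinear\<^sup>*\<^sup>* w u" "E w z"
  shows "\<exists>z'. E u z' \<and> collinear\<^sup>*\<^sup>* z z'"
  using assms
proof (induction arbitrary: z rule: rtranclp_induct)
  case (step y u)
  obtain z1 where z1: "E y z1" "collinear\<^sup>*\<^sup>* z z1" using step.IH[OF step.prems] by blast
  obtain m where m: "E y m" "E u m" using step.hyps(2) unfolding collinear_def by blast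
  \<comment> \<open>z1 and m are both neighbours of y\<close>
  then show ?case using z1 collinear_rtranclp_if_common_nbr by (meson rtranclp_trans)
qed blast

lemma bipartition_other_side_connected:
  assumes AB: "bipartition A B" and connA: "\<forall>p\<in>A. \<forall>q\<in>A. collinear\<^sup>*\<^sup>* p q"
    and pq: "p \<in> B" "q \<in> B"
  shows "collinear\<^sup>*\<^sup>* p q"
proof -
  have "\<exists>x\<in>A. E x b" if "b \<in> B" for b
  proof -
    have "b \<in> V" using that AB unfolding bipartition_def by blast
    then have "nbhd V E b \<noteq> {}" using card_nbhd r_ge_3 by fastforce
    then show ?thesis using AB that E_sym unfolding bipartition_def nbhd_def by blast
  qed
  then obtain x1 x2 where x: "x1 \<in> A" "E x1 p" "x2 \<in> A" "E x2 q" using pq by blast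
  then obtain z where "E x2 z" "collinear\<^sup>*\<^sup>* p z"
    using collinear_rtranclp_nbr connA by blast
  then show ?thesis using collinear_rtranclp_if_common_nbr x(4) by (meson rtranclp_trans)
qed

lemma bipartition_collinear_class:
  assumes v0: "v0 \<in> V" and ne: "{u\<in>V. collinear\<^sup>*\<^sup>* v0 u} \<noteq> V"
  shows "bipartition {u\<in>V. collinear\<^sup>*\<^sup>* v0 u} (V - {u\<in>V. collinear\<^sup>*\<^sup>* v0 u})"
proof -
  define A where "A = {u\<in>V. collinear\<^sup>*\<^sup>* v0 u}"
  have A_closed: "w \<in> A" if "u \<in> A" "collinear\<^sup>*\<^sup>* u w" "w \<in> V" for u w
    using that by (auto simp: A_def)
  have to_A: "\<exists>x\<in>A. E x z" if "z \<in> V - A" for z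
  proof -
    have "E\<^sup>*\<^sup>* v0 z" using connected v0 that unfolding connected_graph_def by blast
    moreover have "\<not> collinear\<^sup>*\<^sup>* v0 z" using that A_def by blast
    ultimately obtain x where "collinear\<^sup>*\<^sup>* v0 x" "E x z"
      using walk_ends_collinear by blast
    then show ?thesis using E_in_V A_def by blast
  qed
  obtain z0 where z0: "z0 \<in> V - A" using ne A_def by blast
  have "w \<in> V - A" if "u \<in> A" "E u w" for u w
  proof (rule ccontr)
    assume "w \<notin> V - A"
    then have "w \<in> A" using that E_in_V by blast
    obtain x where x: "x \<in> A" "E x z0" using to_A[OF z0] by blast
    have "collinear\<^sup>*\<^sup>* x u"
      using x(1) that(1) collinear_rtranclp_sym unfolding A_def by (blast intro: rtranclp_trans)
    then obtain z' where "E u z'" "collinear\<^sup>*\<^sup>* z0 z'" using collinear_rtranclp_nbr x(2) by blast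
    then have "collinear\<^sup>*\<^sup>* w z0"
      using collinear_rtranclp_if_common_nbr[OF that(2)] collinear_rtranclp_sym by (meson rtranclp_trans)
    then show False using A_closed[OF \<open>w \<in> A\<close>] z0 by blast
  qed
  moreover have "w \<in> A" if u: "u \<in> V - A" "E u w" for u w
  proof -
    obtain x where "x \<in> A" "E x u" using to_A[OF u(1)] by blast
    then show ?thesis
      using A_closed collinear_rtranclp_if_common_nbr u(2) E_sym E_in_V by blast
  qed
  ultimately show ?thesis unfolding bipartition_def A_def by blast
qed

lemma large_packing_if_collinearity_connected:
  assumes collinearity_connected
  shows "\<exists>T. packing V E T \<and> card V \<le> r * (r - 1) * card T"
proof -
  have False if "pairwise_collinear" "card V = r * (r - 1) + 1"
  proof -
    \<comment> \<open>G would be a friendship graph\<close>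
    have "proj_plane V V E (r - 1)" using proj_plane_if_pairwise_collinear that by blast
    then have "\<forall>u\<in>V. \<forall>v\<in>V. u \<noteq> v \<longrightarrow> (\<exists>!w. w \<in> V \<and> E u w \<and> E v w)"
      by (simp add: proj_plane_def)
    then show False using no_regular_friendship_graph simple regular r_ge_3 that(2) by blast
  qed
  then show ?thesis
    using large_noncollinear_set_or_complete[OF assms nonempty] packing_iff_noncollinear_set by blast
qed

lemma bipartition_collinear_same_side:
  assumes "bipartition X Y" "p \<in> X" "collinear p q"
  shows "q \<in> X"
  using bipartition_collinear_iff[OF assms(1,2)] assms
    regular_incidence.collinear_def[OF regular_incidence_bipartition[OF assms(1)]] by blast

lemma bipartition_collinearity_connected:
  assumes XY: "bipartition X Y" and conn: "\<forall>p\<in>X. \<forall>q\<in>X. collinear\<^sup>*\<^sup>* p q"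
  shows "regular_incidence.collinearity_connected X Y E"
  unfolding regular_incidence.collinearity_connected_def[OF regular_incidence_bipartition[OF XY]]
proof (intro ballI)
  fix p q assume pq: "p \<in> X" "q \<in> X"
  have "collinear\<^sup>*\<^sup>* p q" using conn pq by blast
  then have "(regular_incidence.collinear X Y E)\<^sup>*\<^sup>* p q \<and> q \<in> X"
  proof (induction rule: rtranclp_induct)
    case (step y z)
    then show ?case
      using bipartition_collinear_iff[OF XY] bipartition_collinear_same_side[OF XY]
      by (meson rtranclp.rtrancl_into_rtrancl)
  qed (use pq in simp)
  then show "(regular_incidence.collinear X Y E)\<^sup>*\<^sup>* p q" by blast
qed

lemma bipartition_noncollinear_set_iff:
  assumes XY: "bipartition X Y"
  shows "regular_incidence.noncollinear_set X Y E T \<longleftrightarrow> T \<subseteq> X \<and> noncollinear_set T"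
  using bipartition_collinear_iff[OF XY] XY
  unfolding regular_incidence.noncollinear_set_def[OF regular_incidence_bipartition[OF XY]]
    noncollinear_set_def bipartition_def by blast

lemma graph_iso_bipartition:
  assumes XY: "bipartition X Y"
  shows "graph_iso V E (inc_vertices X Y) (inc_adj X Y E) (\<lambda>v. if v \<in> X then Inl v else Inr v)"
proof -
  have V: "V = X \<union> Y" "X \<inter> Y = {}" using XY unfolding bipartition_def by blast+
  have "bij_betw (\<lambda>v. if v \<in> X then Inl v else Inr v) V (inc_vertices X Y)"
    unfolding bij_betw_def inj_on_def inc_vertices_def using V by (auto simp: image_iff)
  moreover have "E u v \<longleftrightarrow> inc_adj X Y E (if u \<in> X then Inl u else Inr u) (if v \<in> X then Inl v else Inr v)"
    if "u \<in> V" "v \<in> V" for u v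
    using that XY E_sym unfolding bipartition_def by auto
  ultimately show ?thesis unfolding graph_iso_def by blast
qed

lemma pp_incidence_graph_if_bipartition:
  assumes XY: "bipartition X Y" and pc: "regular_incidence.pairwise_collinear X Y E"
    and card_X: "card X = r * (r - 1) + 1"
  shows "is_pp_incidence_graph V E (r - 1)"
  using regular_incidence.proj_plane_if_pairwise_collinear[OF regular_incidence_bipartition[OF XY] pc card_X]
    graph_iso_bipartition[OF XY] unfolding is_pp_incidence_graph_def by blast

lemma large_packing_if_bipartition:
  assumes AB: "bipartition A B" and connA: "\<forall>p\<in>A. \<forall>q\<in>A. collinear\<^sup>*\<^sup>* p q"
    and not_pp: "\<not> is_pp_incidence_graph V E (r - 1)"
  shows "\<exists>T. packing V E T \<and> card V \<le> r * (r - 1) * card T"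
proof -
  have BA: "bipartition B A" by (rule bipartition_swap[OF AB])
  have connB: "\<forall>p\<in>B. \<forall>q\<in>B. collinear\<^sup>*\<^sup>* p q" using bipartition_other_side_connected[OF AB connA] by blast
  obtain v where v: "v \<in> V" using nonempty by blast
  then have "nbhd V E v \<noteq> {}" using card_nbhd r_ge_3 by fastforce
  then obtain w where "E v w" using E_sym unfolding nbhd_def by blast
  \<comment> \<open>the edge vw has one end on each side\<close>
  then have ne: "A \<noteq> {}" "B \<noteq> {}" using AB v unfolding bipartition_def by blast+
  obtain TA where TA: "TA \<subseteq> A" "noncollinear_set TA" "card A \<le> r * (r - 1) * card TA"
    using regular_incidence.large_noncollinear_set_or_complete[OF regular_incidence_bipartition[OF AB]
        bipartition_collinearity_connected[OF AB connA] ne(1)]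
      pp_incidence_graph_if_bipartition[OF AB] not_pp bipartition_noncollinear_set_iff[OF AB] by blast
  obtain TB where TB: "TB \<subseteq> B" "noncollinear_set TB" "card B \<le> r * (r - 1) * card TB"
    using regular_incidence.large_noncollinear_set_or_complete[OF regular_incidence_bipartition[OF BA]
        bipartition_collinearity_connected[OF BA connB] ne(2)]
      pp_incidence_graph_if_bipartition[OF BA] not_pp bipartition_noncollinear_set_iff[OF BA] by blast
  \<comment> \<open>collinear vertices lie on the same side\<close>
  have "noncollinear_set (TA \<union> TB)"
    using TA TB bipartition_collinear_same_side[OF AB] bipartition_collinear_same_side[OF BA] AB
    unfolding noncollinear_set_def bipartition_def by blast
  moreover have fin: "finite A" "finite B" "A \<inter> B = {}" "V = A \<union> B"
    using AB finite_V finite_subset unfolding bipartition_def by auto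
  then have "card V = card A + card B" "card (TA \<union> TB) = card TA + card TB"
    using TA(1) TB(1) by (auto intro!: card_Un_disjoint intro: finite_subset)
  ultimately show ?thesis
    using add_mono[OF TA(3) TB(3)] packing_iff_noncollinear_set
    by (intro exI[of _ "TA \<union> TB"]) (simp add: add_mult_distrib2)
qed

lemma large_packing_unless_pp:
  assumes "\<not> is_pp_incidence_graph V E (r - 1)"
  shows "\<exists>T. packing V E T \<and> card V \<le> r * (r - 1) * card T"
proof -
  obtain v0 where v0: "v0 \<in> V" using nonempty by blast
  define A where "A = {u\<in>V. collinear\<^sup>*\<^sup>* v0 u}"
  have connA: "\<forall>p\<in>A. \<forall>q\<in>A. collinear\<^sup>*\<^sup>* p q"
    unfolding A_def using collinear_rtranclp_sym by (blast intro: rtranclp_trans)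
  show ?thesis
  proof (cases "A = V")
    case True
    then show ?thesis
      using large_packing_if_collinearity_connected connA unfolding collinearity_connected_def by blast
  next
    case False
    then show ?thesis
      using large_packing_if_bipartition[OF _ connA assms] bipartition_collinear_class[OF v0] A_def by blast
  qed
qed

lemma ktuple_tdn_le_unless_pp:
  assumes "\<not> is_pp_incidence_graph V E (r - 1)"
  shows "real (ktuple_tdn V E (r - 1)) \<le> (real (r * (r - 1)) - 1) / real (r * (r - 1)) * real (card V)"
proof -
  obtain T where T: "packing V E T" "card V \<le> r * (r - 1) * card T"
    using large_packing_unless_pp[OF assms] by blast
  have "card T \<le> card V" using T(1) finite_V by (simp add: packing_def card_mono)
  then have "real (card V - card T) \<le> (real (r * (r - 1)) - 1) / real (r * (r - 1)) * real (card V)"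
    using real_diff_le_fraction[OF T(2)] r_ge_3 by simp
  moreover have "ktuple_tdn V E (r - 1) \<le> card V - card T"
    by (rule ktuple_tdn_le_card_minus_packing[OF finite_V regular T(1)])
  ultimately show ?thesis by (meson of_nat_le_iff order_trans)
qed

lemma ktuple_tdn_if_pp:
  assumes "is_pp_incidence_graph V E (r - 1)"
  shows "card V = 2 * (r * (r - 1) + 1)" and "ktuple_tdn V E (r - 1) = 2 * r * (r - 1)"
proof -
  obtain P L :: "'a set" and I f where "proj_plane P L I (r - 1)" "graph_iso V E (inc_vertices P L) (inc_adj P L I) f"
    using assms unfolding is_pp_incidence_graph_def by blast
  then have "card V = 2 * (r * (r - 1) + 1)" "ktuple_tdn V E (r - 1) = card V - 2"
    using ktuple_tdn_proj_plane_incidence_graph[OF finite_V regular] r_ge_3 by auto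
  then show "card V = 2 * (r * (r - 1) + 1)" "ktuple_tdn V E (r - 1) = 2 * r * (r - 1)"
    by simp_all
qed

end

theorem theorem4:
  fixes V :: "'a set" and E :: "'a \<Rightarrow> 'a \<Rightarrow> bool" and r :: nat
  assumes "r \<ge> 3"
    and "simple_graph V E" and "V \<noteq> {}"
    and "connected_graph V E" and "regular V E r"
  shows "(\<not> is_pp_incidence_graph V E (r - 1) \<longrightarrow>
            real (ktuple_tdn V E (r - 1))
              \<le> (real (r * (r - 1)) - 1) / real (r * (r - 1)) * real (card V))
       \<and> (is_pp_incidence_graph V E (r - 1) \<longrightarrow>
            card V = 2 * (r * (r - 1) + 1)
            \<and> real (ktuple_tdn V E (r - 1))
                = real (r * (r - 1)) / real (r * (r - 1) + 1) * real (card V)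
            \<and> ktuple_tdn V E (r - 1) = 2 * r * (r - 1))"
proof -
  interpret connected_regular_graph V E r using assms by unfold_locales
  show ?thesis
  proof (intro conjI impI)
    assume pp: "is_pp_incidence_graph V E (r - 1)"
    show "card V = 2 * (r * (r - 1) + 1)" "ktuple_tdn V E (r - 1) = 2 * r * (r - 1)"
      using ktuple_tdn_if_pp[OF pp] by simp_all
    moreover have "real d / real (d + 1) * real (2 * (d + 1)) = real (2 * d)" for d :: nat
      by (simp add: field_simps)
    ultimately show "real (ktuple_tdn V E (r - 1)) = real (r * (r - 1)) / real (r * (r - 1) + 1) * real (card V)"
      by (metis mult.assoc)
  qed (rule ktuple_tdn_le_unless_pp)
qed

end
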